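(* Let $r\ge3$, $n>r$ and $1<i<r$. Let $M=(E_{r-1}E_{r-2}\cdots E_1)(E_{r+1}E_{r+2}\cdots E_n)1_\omega\in T$. Then $(vF_{i-1}E_{i-1}-1)M=M(vF_iE_i-1)$ in $T$.
   Context: $T$ is the $\mathbb{Q}(v)$-algebra with generators $E_i,F_i,K_i^{\pm1}$ ($1\le i\le n$, indices mod $n$) and relations: $K_iK_j=K_jK_i$; $K_iK_i^{-1}=K_i^{-1}K_i=1$; $K_iE_j=v^{\epsilon^+(i,j)}E_jK_i$; $K_iF_j=v^{-\epsilon^+(i,j)}F_jK_i$ ($\epsilon^+(i,j)=1$ if $j=i$, $-1$ if $j\equiv i-1\pmod n$, $0$ otherwise); $E_iF_j-F_jE_i=\delta_{ij}\frac{K_iK_{i+1}^{-1}-K_i^{-1}K_{i+1}}{v-v^{-1}}$; $E_iE_j=E_jE_i$, $F_iF_j=F_jF_i$ if $i-j\not\equiv\pm1$; $E_i^2E_j-(v+v^{-1})E_iE_jE_i+E_jE_i^2=0$, $F_i^2F_j-(v+v^{-1})F_iF_jF_i+F_jF_i^2=0$ if $i-j\equiv\pm1\pmod n$; $K_1\cdots K_n=v^r$; $\prod_{j=0}^r(K_i-v^j)=0$. For a composition $\lambda$ of $r$ into $n$ nonnegative parts, $1_\lambda=\prod_{i=1}^n\prod_{s=1}^{\lambda_i}\frac{K_iv^{-s+1}-K_i^{-1}v^{s-1}}{v^s-v^{-s}}$; $\omega=(1,\dots,1,0,\dots,0)$ with $r$ ones and $n-r$ zeros. *)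

theory Defs
  imports "HOL-Computational_Algebra.Polynomial" "HOL-Computational_Algebra.Fraction_Field"
begin

type_synonym qv = "rat poly fract"

definition vv :: qv where "vv = Fract [:0, 1:] 1"

definition vpow :: "int \<Rightarrow> qv" where
  "vpow e = (if 0 \<le> e then vv ^ nat e else inverse vv ^ nat (- e))"

text \<open>Generators of the free algebra; indices are meant to lie in {1..n}.\<close>
datatype gen = GE nat | GF nat | GK nat | GKi nat

text \<open>Free associative Q(v)-algebra on gen: coefficient functions on words.
  (Elements arising below all have finite support.)\<close>
type_synonym fa = "gen list \<Rightarrow> qv"

definition fa_add :: "fa \<Rightarrow> fa \<Rightarrow> fa" where "fa_add p q = (\<lambda>w. p w + q w)"
definition fa_diff :: "fa \<Rightarrow> fa \<Rightarrow> fa" where "fa_diff p q = (\<lambda>w. p w - q w)"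
definition fa_smult :: "qv \<Rightarrow> fa \<Rightarrow> fa" where "fa_smult c p = (\<lambda>w. c * p w)"
definition fa_mult :: "fa \<Rightarrow> fa \<Rightarrow> fa" where
  "fa_mult p q = (\<lambda>w. \<Sum>k\<in>{0..length w}. p (take k w) * q (drop k w))"
definition fa_mono :: "gen list \<Rightarrow> fa" where "fa_mono u = (\<lambda>w. if w = u then 1 else 0)"
definition fa_const :: "qv \<Rightarrow> fa" where "fa_const c = fa_smult c (fa_mono [])"
definition fa_prod :: "fa list \<Rightarrow> fa" where "fa_prod xs = foldr fa_mult xs (fa_mono [])"

abbreviation "Eg i \<equiv> fa_mono [GE i]"
abbreviation "Fg i \<equiv> fa_mono [GF i]"
abbreviation "Kg i \<equiv> fa_mono [GK i]"
abbreviation "Kig i \<equiv> fa_mono [GKi i]"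

definition wrap :: "nat \<Rightarrow> int \<Rightarrow> nat" where
  "wrap n j = nat ((j - 1) mod int n) + 1"

definition epsp :: "nat \<Rightarrow> nat \<Rightarrow> nat \<Rightarrow> int" where
  "epsp n i j = (if j = i then 1 else if j = wrap n (int i - 1) then -1 else 0)"

definition adj :: "nat \<Rightarrow> nat \<Rightarrow> nat \<Rightarrow> bool" where
  "adj n i j \<longleftrightarrow> j = wrap n (int i + 1) \<or> j = wrap n (int i - 1)"

definition Trels :: "nat \<Rightarrow> nat \<Rightarrow> fa set" where
  "Trels n r =
    {fa_diff (fa_mult (Kg i) (Kg j)) (fa_mult (Kg j) (Kg i)) | i j. i \<in> {1..n} \<and> j \<in> {1..n}}
  \<union> {fa_diff (fa_mult (Kg i) (Kig i)) (fa_mono []) | i. i \<in> {1..n}}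
  \<union> {fa_diff (fa_mult (Kig i) (Kg i)) (fa_mono []) | i. i \<in> {1..n}}
  \<union> {fa_diff (fa_mult (Kg i) (Eg j)) (fa_smult (vpow (epsp n i j)) (fa_mult (Eg j) (Kg i)))
       | i j. i \<in> {1..n} \<and> j \<in> {1..n}}
  \<union> {fa_diff (fa_mult (Kg i) (Fg j)) (fa_smult (vpow (- epsp n i j)) (fa_mult (Fg j) (Kg i)))
       | i j. i \<in> {1..n} \<and> j \<in> {1..n}}
  \<union> {fa_diff (fa_diff (fa_mult (Eg i) (Fg j)) (fa_mult (Fg j) (Eg i)))
       (if i = j then fa_smult (inverse (vv - inverse vv))
           (fa_diff (fa_mult (Kg i) (Kig (wrap n (int i + 1))))
                    (fa_mult (Kig i) (Kg (wrap n (int i + 1)))))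
        else (\<lambda>_. 0))
       | i j. i \<in> {1..n} \<and> j \<in> {1..n}}
  \<union> {fa_diff (fa_mult (Eg i) (Eg j)) (fa_mult (Eg j) (Eg i))
       | i j. i \<in> {1..n} \<and> j \<in> {1..n} \<and> \<not> adj n i j}
  \<union> {fa_diff (fa_mult (Fg i) (Fg j)) (fa_mult (Fg j) (Fg i))
       | i j. i \<in> {1..n} \<and> j \<in> {1..n} \<and> \<not> adj n i j}
  \<union> {fa_add (fa_diff (fa_prod [Eg i, Eg i, Eg j]) (fa_smult (vv + inverse vv) (fa_prod [Eg i, Eg j, Eg i])))
        (fa_prod [Eg j, Eg i, Eg i])
       | i j. i \<in> {1..n} \<and> j \<in> {1..n} \<and> adj n i j}
  \<union> {fa_add (fa_diff (fa_prod [Fg i, Fg i, Fg j]) (fa_smult (vv + inverse vv) (fa_prod [Fg i, Fg j, Fg i])))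
        (fa_prod [Fg j, Fg i, Fg i])
       | i j. i \<in> {1..n} \<and> j \<in> {1..n} \<and> adj n i j}
  \<union> {fa_diff (fa_prod (map Kg [1..<n+1])) (fa_const (vv ^ r))}
  \<union> {fa_prod (map (\<lambda>j. fa_diff (Kg i) (fa_const (vv ^ j))) [0..<r+1]) | i. i \<in> {1..n}}"

inductive_set Tideal :: "nat \<Rightarrow> nat \<Rightarrow> fa set" for n r where
  rel: "x \<in> Trels n r \<Longrightarrow> x \<in> Tideal n r"
| add: "x \<in> Tideal n r \<Longrightarrow> y \<in> Tideal n r \<Longrightarrow> fa_add x y \<in> Tideal n r"
| smult: "x \<in> Tideal n r \<Longrightarrow> fa_smult c x \<in> Tideal n r"
| mult: "x \<in> Tideal n r \<Longrightarrow> fa_mult (fa_mult (fa_mono a) x) (fa_mono b) \<in> Tideal n r"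

definition T_eq :: "nat \<Rightarrow> nat \<Rightarrow> fa \<Rightarrow> fa \<Rightarrow> bool" where
  "T_eq n r p q \<longleftrightarrow> fa_diff p q \<in> Tideal n r"

definition one_factor :: "nat \<Rightarrow> nat \<Rightarrow> fa" where
  "one_factor i s = fa_smult (inverse (vv ^ s - inverse vv ^ s))
     (fa_diff (fa_smult (inverse vv ^ (s - 1)) (Kg i)) (fa_smult (vv ^ (s - 1)) (Kig i)))"

definition one_lam :: "nat \<Rightarrow> (nat \<Rightarrow> nat) \<Rightarrow> fa" where
  "one_lam n lam = fa_prod (concat (map (\<lambda>i. map (one_factor i) [1..<lam i + 1]) [1..<n+1]))"

definition omega :: "nat \<Rightarrow> nat \<Rightarrow> nat" where
  "omega r i = (if 1 \<le> i \<and> i \<le> r then 1 else 0)"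

end

theory Submission
  imports Defs "HOL-Library.Function_Algebras"
begin

(* Write M = E_hi E_i E_(i-1) E_lo E_tail 1_omega with E_hi = E_(r-1) ... E_(i+1),
   E_lo = E_(i-2) ... E_1 and E_tail = E_(r+1) ... E_n.

   The key fact is that K_k acts on 1_omega by v for every k <= r. The relation
   prod_j (K_k - v^j) = 0 says that K_k has weights in {1, v, ..., v^r}; for k <= r the factor
   (K_k - K_k^-1) / (v - v^-1) of 1_omega removes the weight 1, and K_1 ... K_n = v^r then leaves
   only the weight v for K_1, ..., K_r (and 1 for the others). Hence every monomial E_ks 1_omega is
   a weight vector for K_1, ..., K_r, and it vanishes as soon as one of these weights is v^-1.

   Both sides are then evaluated with E_j F_j = F_j E_j + [K_j K_(j+1)^-1; 0], whose second term
   acts on the weight vectors at hand by the scalar 0, -1 or 1: F_(i-1) E_(i-1) M and M F_i E_i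
   both reduce to E_hi E_(i-1) E_lo E_tail E_i 1_omega, the terms containing F vanishing by the
   weight argument. *)

lemma prod_list_commute:
  fixes x :: "'a :: monoid_mult"
  shows "(\<And>y. y \<in> set ys \<Longrightarrow> x * y = y * x) \<Longrightarrow> x * prod_list ys = prod_list ys * x"
proof (induction ys)
  case (Cons y ys)
  then have "x * prod_list ys = prod_list ys * x" "x * y = y * x" by auto
  then show ?case
    by (simp add: mult.assoc[symmetric]) (simp add: mult.assoc)
qed simp

lemma prod_list_map_eq_mult_remove1:
  fixes f :: "'b \<Rightarrow> 'a :: monoid_mult"
  assumes "k \<in> set ks" and "\<And>l. l \<in> set ks \<Longrightarrow> f k * f l = f l * f k"
  shows "(\<Prod>l\<leftarrow>ks. f l) = f k * (\<Prod>l\<leftarrow>remove1 k ks. f l)"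
  using assms
proof (induction ks)
  case (Cons l ks)
  then show ?case
    by (cases "k = l") (auto simp: mult.assoc[symmetric])
qed simp

lemma mult_commute_annihilate:
  fixes a b w :: "'a :: ring"
  shows "b * a = a * b \<Longrightarrow> b * w = 0 \<Longrightarrow> b * (a * w) = 0"
  by (metis mult.assoc mult_zero_right)

lemma power_sum_list: "(\<Prod>k\<leftarrow>ks. (a::'a::comm_monoid_mult) ^ d k) = a ^ (\<Sum>k\<leftarrow>ks. d k)"
  by (induction ks) (simp_all add: power_add)

subsection \<open>The free algebra with finite support\<close>

lemma fa_mult_Nil: "fa_mult p q [] = p [] * q []"
  by (simp add: fa_mult_def)

lemma fa_mult_Cons: "fa_mult p q (a # w) = p [] * q (a # w) + fa_mult (\<lambda>u. p (a # u)) q w"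
  unfolding fa_mult_def by (simp only: length_Cons sum.atLeast0_atMost_Suc_shift) simp

lemma fa_mult_add_left: "fa_mult (\<lambda>u. p u + q u) s = (\<lambda>w. fa_mult p s w + fa_mult q s w)"
  unfolding fa_mult_def by (simp add: distrib_right sum.distrib)

lemma fa_mult_add_right: "fa_mult p (\<lambda>w. q w + s w) = (\<lambda>w. fa_mult p q w + fa_mult p s w)"
  unfolding fa_mult_def by (simp add: distrib_left sum.distrib)

lemma fa_mult_scale_left: "fa_mult (\<lambda>u. c * p u) q w = c * fa_mult p q w"
  unfolding fa_mult_def by (simp add: sum_distrib_left mult.assoc)

lemma fa_mult_assoc: "fa_mult (fa_mult p q) s = fa_mult p (fa_mult q s)"
proof
  fix w
  show "fa_mult (fa_mult p q) s w = fa_mult p (fa_mult q s) w"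
  proof (induction w arbitrary: p q s)
    case Nil
    then show ?case by (simp add: fa_mult_Nil)
  next
    case (Cons a w)
    have "(\<lambda>u. fa_mult p q (a # u)) = (\<lambda>u. p [] * q (a # u) + fa_mult (\<lambda>u. p (a # u)) q u)"
      and "(\<lambda>u. fa_mult q s (a # u)) = (\<lambda>u. q [] * s (a # u) + fa_mult (\<lambda>u. q (a # u)) s u)"
      by (simp_all add: fa_mult_Cons)
    then show ?case
      by (simp add: fa_mult_Cons fa_mult_add_left fa_mult_scale_left Cons.IH fa_mult_Nil)
        (simp add: fa_mult_def algebra_simps sum_distrib_left)
  qed
qed

lemma fa_mult_one_left: "fa_mult (fa_mono []) p = p"
  by (rule ext) (simp add: fa_mult_def fa_mono_def sum.atLeast_Suc_atMost[of 0]
      del: sum.atLeast0_atMost_Suc)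

lemma fa_mult_one_right: "fa_mult p (fa_mono []) = p"
proof
  fix w
  have "fa_mult p (fa_mono []) w = (\<Sum>k\<in>{0..length w}. if k = length w then p w else 0)"
    unfolding fa_mult_def fa_mono_def by (rule sum.cong) auto
  then show "fa_mult p (fa_mono []) w = p w" by simp
qed

definition fa_supp :: "fa \<Rightarrow> gen list set" where "fa_supp p = {w. p w \<noteq> 0}"

lemma fa_supp_mult: "fa_supp (fa_mult p q) \<subseteq> (\<lambda>(u, v). u @ v) ` (fa_supp p \<times> fa_supp q)"
proof
  fix w assume "w \<in> fa_supp (fa_mult p q)"
  then obtain k where "p (take k w) * q (drop k w) \<noteq> 0"
    unfolding fa_supp_def fa_mult_def by (meson mem_Collect_eq sum.neutral)
  then have "(take k w, drop k w) \<in> fa_supp p \<times> fa_supp q"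
    by (auto simp: fa_supp_def)
  then show "w \<in> (\<lambda>(u, v). u @ v) ` (fa_supp p \<times> fa_supp q)"
    by (rule image_eqI[rotated]) simp
qed

lemma finite_fa_supp_mult:
  "finite (fa_supp p) \<Longrightarrow> finite (fa_supp q) \<Longrightarrow> finite (fa_supp (fa_mult p q))"
  by (rule finite_subset[OF fa_supp_mult]) simp

lemma finite_fa_supp_add:
  "finite (fa_supp p) \<Longrightarrow> finite (fa_supp q) \<Longrightarrow> finite (fa_supp (\<lambda>w. p w + c * q w))"
  by (rule finite_subset[of _ "fa_supp p \<union> fa_supp q"]) (auto simp: fa_supp_def)

typedef ncpoly = "{p :: fa. finite (fa_supp p)}"
  by (rule exI[of _ "\<lambda>_. 0"]) (simp add: fa_supp_def)

setup_lifting type_definition_ncpoly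

instantiation ncpoly :: ring_1
begin

lift_definition zero_ncpoly :: ncpoly is "\<lambda>_. 0"
  by (simp add: fa_supp_def)
lift_definition one_ncpoly :: ncpoly is "fa_mono []"
  by (simp add: fa_supp_def fa_mono_def)
lift_definition plus_ncpoly :: "ncpoly \<Rightarrow> ncpoly \<Rightarrow> ncpoly" is "\<lambda>p q w. p w + q w"
  using finite_fa_supp_add[where c = 1] by simp
lift_definition uminus_ncpoly :: "ncpoly \<Rightarrow> ncpoly" is "\<lambda>p w. - p w"
  by (simp add: fa_supp_def)
lift_definition minus_ncpoly :: "ncpoly \<Rightarrow> ncpoly \<Rightarrow> ncpoly" is "\<lambda>p q w. p w - q w"
  using finite_fa_supp_add[where c = "-1"] by simp
lift_definition times_ncpoly :: "ncpoly \<Rightarrow> ncpoly \<Rightarrow> ncpoly" is fa_mult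
  by (rule finite_fa_supp_mult)

instance
proof
  fix a b c :: ncpoly
  show "a * b * c = a * (b * c)" by transfer (rule fa_mult_assoc)
  show "1 * a = a" by transfer (rule fa_mult_one_left)
  show "a * 1 = a" by transfer (rule fa_mult_one_right)
  show "(a + b) * c = a * c + b * c" by transfer (rule fa_mult_add_left)
  show "a * (b + c) = a * b + a * c" by transfer (rule fa_mult_add_right)
  show "a + b + c = a + (b + c)" by transfer (simp add: add.assoc)
  show "a + b = b + a" by transfer (simp add: add.commute)
  show "0 + a = a" by transfer simp
  show "- a + a = 0" by transfer simp
  show "a - b = a + - b" by transfer simp
  show "(0::ncpoly) \<noteq> 1" by transfer (metis fa_mono_def zero_neq_one)
qed

end

lift_definition nc_smult :: "qv \<Rightarrow> ncpoly \<Rightarrow> ncpoly" is fa_smult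
  by (simp add: fa_supp_def fa_smult_def)

lift_definition nc_mono :: "gen list \<Rightarrow> ncpoly" is fa_mono
  by (simp add: fa_supp_def fa_mono_def)

lemma nc_smult_mult_left: "nc_smult c a * b = nc_smult c (a * b)"
  by transfer (auto simp: fa_smult_def fa_mult_def sum_distrib_left mult.assoc)

lemma nc_smult_mult_right: "a * nc_smult c b = nc_smult c (a * b)"
  by transfer (auto simp: fa_smult_def fa_mult_def sum_distrib_left mult.left_commute)

lemma nc_smult_diff: "nc_smult c (a - b) = nc_smult c a - nc_smult c b"
  by transfer (simp add: fa_smult_def algebra_simps)

lemma ncpoly_eq_sum_monos:
  "a = (\<Sum>w\<in>fa_supp (Rep_ncpoly a). nc_smult (Rep_ncpoly a w) (nc_mono w))"
proof (rule Rep_ncpoly_inject[THEN iffD1], rule ext)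
  fix u
  have "Rep_ncpoly (\<Sum>w\<in>S. nc_smult (Rep_ncpoly a w) (nc_mono w)) u
      = (\<Sum>w\<in>S. if u = w then Rep_ncpoly a w else 0)" if "finite S" for S
    using that by (induction S rule: finite_induct)
      (simp_all add: zero_ncpoly.rep_eq plus_ncpoly.rep_eq nc_smult.rep_eq fa_smult_def
        nc_mono.rep_eq fa_mono_def)
  moreover have "finite (fa_supp (Rep_ncpoly a))"
    using Rep_ncpoly by simp
  ultimately show "Rep_ncpoly a u
      = Rep_ncpoly (\<Sum>w\<in>fa_supp (Rep_ncpoly a). nc_smult (Rep_ncpoly a w) (nc_mono w)) u"
    by (simp add: sum.delta fa_supp_def)
qed

lemma Rep_ncpoly_zero: "Rep_ncpoly 0 = (\<lambda>_. 0)"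
  by transfer simp

lemma fa_mono_Rep: "fa_mono w = Rep_ncpoly (nc_mono w)"
  by transfer simp

lemma fa_mult_Rep: "fa_mult (Rep_ncpoly a) (Rep_ncpoly b) = Rep_ncpoly (a * b)"
  by transfer simp

lemma fa_add_Rep: "fa_add (Rep_ncpoly a) (Rep_ncpoly b) = Rep_ncpoly (a + b)"
  by transfer (simp add: fa_add_def)

lemma fa_diff_Rep: "fa_diff (Rep_ncpoly a) (Rep_ncpoly b) = Rep_ncpoly (a - b)"
  by transfer (simp add: fa_diff_def)

lemma fa_smult_Rep: "fa_smult c (Rep_ncpoly a) = Rep_ncpoly (nc_smult c a)"
  by transfer simp

lemma fa_const_Rep: "fa_const c = Rep_ncpoly (nc_smult c 1)"
  by transfer (simp add: fa_const_def)

lemma fa_prod_Rep: "fa_prod (map (\<lambda>x. Rep_ncpoly (g x)) xs) = Rep_ncpoly (prod_list (map g xs))"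
  by (induction xs) (simp_all add: fa_prod_def fa_mult_Rep one_ncpoly.rep_eq)

lemmas fa_Rep = fa_mono_Rep fa_mult_Rep fa_add_Rep fa_diff_Rep fa_smult_Rep fa_const_Rep
  fa_prod_Rep

lemma nc_smult_zero: "nc_smult c 0 = 0"
  by transfer (simp add: fa_smult_def)

lemma nc_mono_Nil: "nc_mono [] = 1"
  by transfer simp

lemma nc_smult_minus_one: "nc_smult (-1) a = - a"
  by transfer (simp add: fa_smult_def)

lemma nc_smult_add_left: "nc_smult (c + d) a = nc_smult c a + nc_smult d a"
  by transfer (simp add: fa_smult_def algebra_simps)

lemma nc_smult_one: "nc_smult 1 a = a"
  by transfer (simp add: fa_smult_def)

lemma nc_smult_nc_smult: "nc_smult c (nc_smult d a) = nc_smult (c * d) a"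
  by transfer (simp add: fa_smult_def mult.assoc)

definition T_ideal :: "nat \<Rightarrow> nat \<Rightarrow> ncpoly set" where
  "T_ideal n r = {a. Rep_ncpoly a \<in> Tideal n r}"

lemma T_ideal_smult: "a \<in> T_ideal n r \<Longrightarrow> nc_smult c a \<in> T_ideal n r"
  by (simp add: T_ideal_def fa_smult_Rep[symmetric] Tideal.smult)

lemma T_ideal_zero: "0 \<in> T_ideal n r"
proof -
  have "fa_diff (fa_prod (map Kg [1..<n+1])) (fa_const (vv ^ r)) \<in> Tideal n r"
    by (rule Tideal.rel) (unfold Trels_def, blast)
  then have "fa_smult 0 (fa_diff (fa_prod (map Kg [1..<n+1])) (fa_const (vv ^ r))) \<in> Tideal n r"
    by (rule Tideal.smult)
  then show ?thesis
    by (simp add: T_ideal_def Rep_ncpoly_zero fa_smult_def)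
qed

lemma T_ideal_add: "a \<in> T_ideal n r \<Longrightarrow> b \<in> T_ideal n r \<Longrightarrow> a + b \<in> T_ideal n r"
  by (simp add: T_ideal_def fa_add_Rep[symmetric] Tideal.add)

lemma T_ideal_uminus: "a \<in> T_ideal n r \<Longrightarrow> - a \<in> T_ideal n r"
  using T_ideal_smult[of a n r "-1"] by (simp add: nc_smult_minus_one)

lemma T_ideal_diff: "a \<in> T_ideal n r \<Longrightarrow> b \<in> T_ideal n r \<Longrightarrow> a - b \<in> T_ideal n r"
  by (metis T_ideal_add T_ideal_uminus diff_conv_add_uminus)

lemma T_ideal_sum:
  "finite S \<Longrightarrow> (\<And>x. x \<in> S \<Longrightarrow> f x \<in> T_ideal n r) \<Longrightarrow> sum f S \<in> T_ideal n r"
  by (induction S rule: finite_induct) (auto intro: T_ideal_add T_ideal_zero)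

lemma T_ideal_mono_mult: "b \<in> T_ideal n r \<Longrightarrow> nc_mono u * b * nc_mono w \<in> T_ideal n r"
  by (simp add: T_ideal_def fa_Rep[symmetric] Tideal.mult)

text \<open>The inductive definition only closes Tideal under multiplication by monomials; by
  finiteness of support this extends to arbitrary factors.\<close>

lemma T_ideal_mult_left: "b \<in> T_ideal n r \<Longrightarrow> a * b \<in> T_ideal n r"
proof -
  assume b: "b \<in> T_ideal n r"
  have "a * b = (\<Sum>w\<in>fa_supp (Rep_ncpoly a). nc_smult (Rep_ncpoly a w) (nc_mono w * b * 1))"
    by (subst ncpoly_eq_sum_monos[of a]) (simp add: sum_distrib_right nc_smult_mult_left)
  also have "\<dots> \<in> T_ideal n r"
    using Rep_ncpoly[of a] T_ideal_mono_mult[OF b, of _ "[]"]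
    by (intro T_ideal_sum T_ideal_smult) (auto simp: nc_mono_Nil)
  finally show ?thesis .
qed

lemma T_ideal_mult_right: "b \<in> T_ideal n r \<Longrightarrow> b * a \<in> T_ideal n r"
proof -
  assume b: "b \<in> T_ideal n r"
  have "b * a = (\<Sum>w\<in>fa_supp (Rep_ncpoly a). nc_smult (Rep_ncpoly a w) (1 * b * nc_mono w))"
    by (subst ncpoly_eq_sum_monos[of a]) (simp add: sum_distrib_left nc_smult_mult_right)
  also have "\<dots> \<in> T_ideal n r"
    using Rep_ncpoly[of a] T_ideal_mono_mult[OF b, of "[]"]
    by (intro T_ideal_sum T_ideal_smult) (auto simp: nc_mono_Nil)
  finally show ?thesis .
qed

text \<open>For n = r = 0 all defining relations are 0; this makes the ring tfam below nontrivial.\<close>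

lemma T_ideal_0_0: "T_ideal 0 0 = {0}"
proof -
  have "x = (\<lambda>_. 0)" if "x \<in> Tideal 0 0" for x
    using that
  proof (induction rule: Tideal.induct)
    case (rel x)
    then show ?case
      by (auto simp: Trels_def fa_diff_def fa_prod_def fa_const_def fa_smult_def)
  qed (simp_all add: fa_add_def fa_smult_def fa_mult_def)
  then have "a = 0" if "a \<in> T_ideal 0 0" for a
    using that Rep_ncpoly_inject[of a 0] by (simp add: T_ideal_def Rep_ncpoly_zero)
  then show ?thesis
    using T_ideal_zero by blast
qed

subsection \<open>The algebras T(n, r) as corners of one ring\<close>

text \<open>Types cannot depend on n and r, so all the quotients ncpoly / T_ideal n r are packed
  into the single ring tfam of families indexed by (n, r); T(n, r) is the corner cut out by
  the central idempotent tunit n r below.\<close>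

definition T_rel :: "(nat \<times> nat \<Rightarrow> ncpoly) \<Rightarrow> (nat \<times> nat \<Rightarrow> ncpoly) \<Rightarrow> bool" where
  "T_rel f g \<longleftrightarrow> (\<forall>n r. f (n, r) - g (n, r) \<in> T_ideal n r)"

lemma T_rel_eqI: "(\<And>nr. f nr = g nr) \<Longrightarrow> T_rel f g"
  by (simp add: T_rel_def T_ideal_zero)

lemma equivp_T_rel: "equivp T_rel"
proof (rule equivpI)
  show "reflp T_rel"
    by (simp add: reflp_def T_rel_eqI)
  show "symp T_rel"
    unfolding symp_def T_rel_def by (metis T_ideal_uminus minus_diff_eq)
  show "transp T_rel"
    unfolding transp_def T_rel_def by (metis T_ideal_add diff_add_cancel add_diff_eq)
qed

quotient_type tfam = "nat \<times> nat \<Rightarrow> ncpoly" / T_rel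
  by (rule equivp_T_rel)

instantiation tfam :: ring_1
begin

lift_definition zero_tfam :: tfam is 0 .
lift_definition one_tfam :: tfam is 1 .
lift_definition plus_tfam :: "tfam \<Rightarrow> tfam \<Rightarrow> tfam" is "(+)"
proof -
  fix f f' g g' :: "nat \<times> nat \<Rightarrow> ncpoly"
  assume "T_rel f f'" "T_rel g g'"
  moreover have "(f + g) (n, r) - (f' + g') (n, r) = (f (n, r) - f' (n, r)) + (g (n, r) - g' (n, r))"
    for n r by (simp add: algebra_simps)
  ultimately show "T_rel (f + g) (f' + g')"
    unfolding T_rel_def by (metis T_ideal_add)
qed
lift_definition minus_tfam :: "tfam \<Rightarrow> tfam \<Rightarrow> tfam" is "(-)"
proof -
  fix f f' g g' :: "nat \<times> nat \<Rightarrow> ncpoly"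
  assume "T_rel f f'" "T_rel g g'"
  moreover have "(f - g) (n, r) - (f' - g') (n, r) = (f (n, r) - f' (n, r)) - (g (n, r) - g' (n, r))"
    for n r by (simp add: algebra_simps)
  ultimately show "T_rel (f - g) (f' - g')"
    unfolding T_rel_def by (metis T_ideal_diff)
qed
lift_definition uminus_tfam :: "tfam \<Rightarrow> tfam" is uminus
proof -
  fix f f' :: "nat \<times> nat \<Rightarrow> ncpoly"
  assume "T_rel f f'"
  moreover have "(- f) (n, r) - (- f') (n, r) = - (f (n, r) - f' (n, r))" for n r
    by (simp add: algebra_simps)
  ultimately show "T_rel (- f) (- f')"
    unfolding T_rel_def by (metis T_ideal_uminus)
qed
lift_definition times_tfam :: "tfam \<Rightarrow> tfam \<Rightarrow> tfam" is "(*)"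
proof -
  fix f f' g g' :: "nat \<times> nat \<Rightarrow> ncpoly"
  assume "T_rel f f'" "T_rel g g'"
  moreover have "(f * g) (n, r) - (f' * g') (n, r)
      = (f (n, r) - f' (n, r)) * g (n, r) + f' (n, r) * (g (n, r) - g' (n, r))" for n r
    by (simp add: algebra_simps)
  ultimately show "T_rel (f * g) (f' * g')"
    unfolding T_rel_def by (metis T_ideal_add T_ideal_mult_left T_ideal_mult_right)
qed

instance
proof
  fix a b c :: tfam
  show "a * b * c = a * (b * c)" by transfer (simp add: mult.assoc T_rel_eqI)
  show "1 * a = a" by transfer (simp add: T_rel_eqI)
  show "a * 1 = a" by transfer (simp add: T_rel_eqI)
  show "(a + b) * c = a * c + b * c" by transfer (simp add: distrib_right T_rel_eqI)
  show "a * (b + c) = a * b + a * c" by transfer (simp add: distrib_left T_rel_eqI)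
  show "a + b + c = a + (b + c)" by transfer (simp add: add.assoc T_rel_eqI)
  show "a + b = b + a" by transfer (simp add: add.commute T_rel_eqI)
  show "0 + a = a" by transfer (simp add: T_rel_eqI)
  show "- a + a = 0" by transfer (simp add: T_rel_eqI)
  show "a - b = a + - b" by transfer (simp add: T_rel_eqI)
  show "(0::tfam) \<noteq> 1"
  proof transfer
    have "(0::ncpoly) - 1 \<notin> T_ideal 0 0"
      by (simp add: T_ideal_0_0)
    then show "\<not> T_rel 0 1"
      unfolding T_rel_def by (metis zero_fun_def one_fun_def)
  qed
qed

end

lifting_forget ncpoly.lifting

lift_definition tsmult :: "qv \<Rightarrow> tfam \<Rightarrow> tfam" is "\<lambda>c f nr. nc_smult c (f nr)"
  unfolding T_rel_def by (metis nc_smult_diff T_ideal_smult)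

lift_definition tclass :: "nat \<Rightarrow> nat \<Rightarrow> ncpoly \<Rightarrow> tfam" is
  "\<lambda>n r a nr. if nr = (n, r) then a else 0" .

lemma tsmult_mult_left: "tsmult c x * y = tsmult c (x * y)"
  by transfer (simp add: nc_smult_mult_left T_rel_eqI)

lemma tsmult_mult_right: "x * tsmult c y = tsmult c (x * y)"
  by transfer (simp add: nc_smult_mult_right T_rel_eqI)

lemma tsmult_diff: "tsmult c (x - y) = tsmult c x - tsmult c y"
  by transfer (simp add: nc_smult_diff T_rel_eqI)

lemma tsmult_add_left: "tsmult (c + d) x = tsmult c x + tsmult d x"
  by transfer (simp add: nc_smult_add_left T_rel_eqI)

lemma tsmult_diff_left: "tsmult (c - d) x = tsmult c x - tsmult d x"
  by (metis add_diff_cancel diff_add_cancel tsmult_add_left)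

lemma tsmult_zero [simp]: "tsmult c 0 = 0"
  by (metis diff_self tsmult_diff)

lemma tsmult_zero_left [simp]: "tsmult 0 x = 0"
  by (metis diff_self tsmult_diff_left)

lemma tsmult_one [simp]: "tsmult 1 x = x"
  by transfer (simp add: nc_smult_one T_rel_eqI)

lemma tsmult_tsmult [simp]: "tsmult c (tsmult d x) = tsmult (c * d) x"
  by transfer (simp add: nc_smult_nc_smult T_rel_eqI)

lemma tsmult_minus_one: "tsmult (-1) x = - x"
  by (metis add.inverse_unique add.left_inverse tsmult_add_left tsmult_one tsmult_zero_left)

lemma tsmult_cancel: "c \<noteq> 0 \<Longrightarrow> tsmult c x = 0 \<Longrightarrow> x = 0"
  by (metis tsmult_tsmult tsmult_one tsmult_zero field_class.field_inverse mult.commute)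

lemma prod_list_tsmult:
  "(\<Prod>k\<leftarrow>ks. tsmult (c k) (x k)) = tsmult (\<Prod>k\<leftarrow>ks. c k) (\<Prod>k\<leftarrow>ks. x k)"
  by (induction ks) (simp_all add: tsmult_mult_left tsmult_mult_right mult.commute)

lemma tclass_add: "tclass n r (a + b) = tclass n r a + tclass n r b"
  by transfer (auto intro!: T_rel_eqI)

lemma tclass_diff: "tclass n r (a - b) = tclass n r a - tclass n r b"
  by transfer (auto intro!: T_rel_eqI)

lemma tclass_mult: "tclass n r (a * b) = tclass n r a * tclass n r b"
  by transfer (auto intro!: T_rel_eqI)

lemma tclass_smult: "tclass n r (nc_smult c a) = tsmult c (tclass n r a)"
  by transfer (auto intro!: T_rel_eqI simp: nc_smult_zero)

lemma tclass_zero: "tclass n r 0 = 0"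
  by (metis diff_self tclass_diff)

lemma tclass_eq_iff: "tclass n r a = tclass n r b \<longleftrightarrow> a - b \<in> T_ideal n r"
proof -
  have "tclass n r a = tclass n r b \<longleftrightarrow>
      T_rel (\<lambda>nr. if nr = (n, r) then a else 0) (\<lambda>nr. if nr = (n, r) then b else 0)"
    by transfer' (simp add: tfam.abs_eq_iff)
  also have "\<dots> \<longleftrightarrow> a - b \<in> T_ideal n r"
    unfolding T_rel_def by (auto simp: T_ideal_zero)
  finally show ?thesis .
qed

lemma T_eq_iff_tclass: "T_eq n r (Rep_ncpoly a) (Rep_ncpoly b) \<longleftrightarrow> tclass n r a = tclass n r b"
  by (simp add: T_eq_def tclass_eq_iff T_ideal_def fa_diff_Rep)

lemma tclass_Trels: "Rep_ncpoly a \<in> Trels n r \<Longrightarrow> tclass n r a = 0"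
  using tclass_eq_iff[of n r a 0] by (simp add: tclass_zero T_ideal_def Tideal.rel)

definition tunit :: "nat \<Rightarrow> nat \<Rightarrow> tfam" where "tunit n r = tclass n r 1"

lemma tunit_central: "tunit n r * x = x * tunit n r"
  unfolding tunit_def by transfer (auto intro!: T_rel_eqI)

lemma tunit_idem: "tunit n r * tunit n r = tunit n r"
  unfolding tunit_def by (metis tclass_mult mult_1_left)

lemma tunit_mult_tclass: "tunit n r * tclass n r a = tclass n r a"
  unfolding tunit_def by (metis tclass_mult mult_1_left)

lemma tclass_mult_tunit: "tclass n r a * tunit n r = tclass n r a"
  by (metis tunit_central tunit_mult_tclass)

lemma tclass_prod_list:
  "tclass n r (prod_list (map g xs)) = tunit n r * prod_list (map (\<lambda>x. tclass n r (g x)) xs)"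
proof (induction xs)
  case (Cons x xs)
  then show ?case
    by (simp add: tclass_mult mult.assoc[symmetric] tclass_mult_tunit tunit_mult_tclass)
qed (simp add: tunit_def)

definition tE :: "nat \<Rightarrow> nat \<Rightarrow> nat \<Rightarrow> tfam" where "tE n r j = tclass n r (nc_mono [GE j])"
definition tF :: "nat \<Rightarrow> nat \<Rightarrow> nat \<Rightarrow> tfam" where "tF n r j = tclass n r (nc_mono [GF j])"
definition tK :: "nat \<Rightarrow> nat \<Rightarrow> nat \<Rightarrow> tfam" where "tK n r j = tclass n r (nc_mono [GK j])"
definition tKi :: "nat \<Rightarrow> nat \<Rightarrow> nat \<Rightarrow> tfam" where "tKi n r j = tclass n r (nc_mono [GKi j])"

lemmas tclass_simps = tclass_add tclass_diff tclass_mult tclass_smult tclass_zero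
  tclass_prod_list tunit_def[symmetric] tE_def[symmetric] tF_def[symmetric] tK_def[symmetric]
  tKi_def[symmetric]

lemma tunit_mult_generator:
  "tunit n r * tE n r j = tE n r j" "tunit n r * tF n r j = tF n r j"
  "tunit n r * tK n r j = tK n r j" "tunit n r * tKi n r j = tKi n r j"
  by (simp_all add: tE_def tF_def tK_def tKi_def tunit_mult_tclass)

lemma generator_mult_tunit:
  "tE n r j * tunit n r = tE n r j" "tF n r j * tunit n r = tF n r j"
  "tK n r j * tunit n r = tK n r j" "tKi n r j * tunit n r = tKi n r j"
  by (simp_all add: tE_def tF_def tK_def tKi_def tclass_mult_tunit)

context
  fixes n r :: nat
begin

lemma tK_commute:
  "i \<in> {1..n} \<Longrightarrow> j \<in> {1..n} \<Longrightarrow> tK n r i * tK n r j = tK n r j * tK n r i"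
proof -
  assume "i \<in> {1..n}" "j \<in> {1..n}"
  then have "fa_diff (fa_mult (Kg i) (Kg j)) (fa_mult (Kg j) (Kg i)) \<in> Trels n r"
    unfolding Trels_def by blast
  from tclass_Trels[OF this[unfolded fa_Rep]] show ?thesis by (simp add: tclass_simps)
qed

lemma tK_tKi: "i \<in> {1..n} \<Longrightarrow> tK n r i * tKi n r i = tunit n r"
proof -
  assume "i \<in> {1..n}"
  then have "fa_diff (fa_mult (Kg i) (Kig i)) (fa_mono []) \<in> Trels n r"
    unfolding Trels_def by blast
  from tclass_Trels[OF this[unfolded fa_Rep nc_mono_Nil]] show ?thesis by (simp add: tclass_simps)
qed

lemma tKi_tK: "i \<in> {1..n} \<Longrightarrow> tKi n r i * tK n r i = tunit n r"
proof -
  assume "i \<in> {1..n}"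
  then have "fa_diff (fa_mult (Kig i) (Kg i)) (fa_mono []) \<in> Trels n r"
    unfolding Trels_def by blast
  from tclass_Trels[OF this[unfolded fa_Rep nc_mono_Nil]] show ?thesis by (simp add: tclass_simps)
qed

lemma tK_tE: "i \<in> {1..n} \<Longrightarrow> j \<in> {1..n} \<Longrightarrow>
    tK n r i * tE n r j = tsmult (vpow (epsp n i j)) (tE n r j * tK n r i)"
proof -
  assume "i \<in> {1..n}" "j \<in> {1..n}"
  then have "fa_diff (fa_mult (Kg i) (Eg j)) (fa_smult (vpow (epsp n i j)) (fa_mult (Eg j) (Kg i)))
      \<in> Trels n r"
    unfolding Trels_def by blast
  from tclass_Trels[OF this[unfolded fa_Rep]] show ?thesis by (simp add: tclass_simps)
qed

lemma tK_tF: "i \<in> {1..n} \<Longrightarrow> j \<in> {1..n} \<Longrightarrow>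
    tK n r i * tF n r j = tsmult (vpow (- epsp n i j)) (tF n r j * tK n r i)"
proof -
  assume "i \<in> {1..n}" "j \<in> {1..n}"
  then have "fa_diff (fa_mult (Kg i) (Fg j)) (fa_smult (vpow (- epsp n i j)) (fa_mult (Fg j) (Kg i)))
      \<in> Trels n r"
    unfolding Trels_def by blast
  from tclass_Trels[OF this[unfolded fa_Rep]] show ?thesis by (simp add: tclass_simps)
qed

lemma tE_tF_same: "i \<in> {1..n} \<Longrightarrow>
    tE n r i * tF n r i - tF n r i * tE n r i = tsmult (inverse (vv - inverse vv))
      (tK n r i * tKi n r (wrap n (int i + 1)) - tKi n r i * tK n r (wrap n (int i + 1)))"
proof -
  assume "i \<in> {1..n}"
  then have "fa_diff (fa_diff (fa_mult (Eg i) (Fg i)) (fa_mult (Fg i) (Eg i)))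
       (fa_smult (inverse (vv - inverse vv))
         (fa_diff (fa_mult (Kg i) (Kig (wrap n (int i + 1))))
           (fa_mult (Kig i) (Kg (wrap n (int i + 1)))))) \<in> Trels n r"
    unfolding Trels_def by (simp; blast)
  from tclass_Trels[OF this[unfolded fa_Rep]] show ?thesis by (simp add: tclass_simps)
qed

lemma tE_tF_commute: "i \<in> {1..n} \<Longrightarrow> j \<in> {1..n} \<Longrightarrow> i \<noteq> j \<Longrightarrow>
    tE n r i * tF n r j = tF n r j * tE n r i"
proof -
  assume "i \<in> {1..n}" "j \<in> {1..n}" "i \<noteq> j"
  then have "fa_diff (fa_diff (fa_mult (Eg i) (Fg j)) (fa_mult (Fg j) (Eg i))) (\<lambda>_. 0)
      \<in> Trels n r"
    unfolding Trels_def by (simp; blast)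
  from tclass_Trels[OF this[unfolded fa_Rep Rep_ncpoly_zero[symmetric] fa_diff_Rep]]
  show ?thesis by (simp add: tclass_simps)
qed

lemma tE_commute: "i \<in> {1..n} \<Longrightarrow> j \<in> {1..n} \<Longrightarrow> \<not> adj n i j \<Longrightarrow>
    tE n r i * tE n r j = tE n r j * tE n r i"
proof -
  assume "i \<in> {1..n}" "j \<in> {1..n}" "\<not> adj n i j"
  then have "fa_diff (fa_mult (Eg i) (Eg j)) (fa_mult (Eg j) (Eg i)) \<in> Trels n r"
    unfolding Trels_def by blast
  from tclass_Trels[OF this[unfolded fa_Rep]] show ?thesis by (simp add: tclass_simps)
qed

lemma tK_prod: "tunit n r * prod_list (map (tK n r) [1..<n+1]) = tsmult (vv ^ r) (tunit n r)"
proof -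
  have "fa_diff (fa_prod (map (\<lambda>j. Rep_ncpoly (nc_mono [GK j])) [1..<n+1])) (fa_const (vv ^ r))
      \<in> Trels n r"
    unfolding Trels_def fa_mono_Rep[symmetric] by blast
  from tclass_Trels[OF this[unfolded fa_Rep]] show ?thesis by (simp add: tclass_simps comp_def)
qed

lemma tK_annihilator: "i \<in> {1..n} \<Longrightarrow>
    tunit n r * prod_list (map (\<lambda>j. tK n r i - tsmult (vv ^ j) (tunit n r)) [0..<r+1]) = 0"
proof -
  assume "i \<in> {1..n}"
  then have "fa_prod (map (\<lambda>j. fa_diff (Kg i) (fa_const (vv ^ j))) [0..<r+1]) \<in> Trels n r"
    unfolding Trels_def by blast
  from tclass_Trels[OF this[unfolded fa_Rep]] show ?thesis by (simp only: tclass_simps)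
qed

lemma tKi_tK_commute:
  assumes "a \<in> {1..n}" "b \<in> {1..n}"
  shows "tKi n r a * tK n r b = tK n r b * tKi n r a"
proof -
  have "tKi n r a * tK n r b = tKi n r a * (tK n r b * tK n r a) * tKi n r a"
    using tK_tKi[OF assms(1)] generator_mult_tunit by (simp add: mult.assoc)
  also have "\<dots> = (tKi n r a * tK n r a) * tK n r b * tKi n r a"
    using tK_commute[OF assms] by (simp add: mult.assoc)
  also have "\<dots> = tK n r b * tKi n r a"
    using tKi_tK[OF assms(1)] tunit_mult_generator by simp
  finally show ?thesis .
qed

lemma tKi_commute:
  assumes "a \<in> {1..n}" "b \<in> {1..n}"
  shows "tKi n r a * tKi n r b = tKi n r b * tKi n r a"
proof -
  have "tKi n r a * tKi n r b = tKi n r a * (tKi n r b * tK n r a) * tKi n r a"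
    using tK_tKi[OF assms(1)] generator_mult_tunit by (simp add: mult.assoc)
  also have "\<dots> = (tKi n r a * tK n r a) * tKi n r b * tKi n r a"
    using tKi_tK_commute[OF assms(2,1)] by (simp add: mult.assoc)
  also have "\<dots> = tKi n r b * tKi n r a"
    using tKi_tK[OF assms(1)] tunit_mult_generator by simp
  finally show ?thesis .
qed

end

lemma vv_nonzero [simp]: "vv \<noteq> 0"
  unfolding vv_def by (simp add: Zero_fract_def eq_fract)

lemma vv_power_eq_one_iff: "vv ^ m = 1 \<longleftrightarrow> m = 0"
proof
  assume "vv ^ m = 1"
  moreover have "vv ^ m = Fract ([:0, 1:] ^ m) 1"
    by (induction m) (simp_all add: vv_def One_fract_def)
  ultimately have "([:0, 1:] :: rat poly) ^ m = 1"
    by (simp add: One_fract_def eq_fract)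
  then have "degree (([:0, 1:] :: rat poly) ^ m) = 0" by simp
  then show "m = 0" by (simp add: degree_power_eq)
qed simp

lemma vv_power_inject: "vv ^ a = vv ^ b \<longleftrightarrow> a = b"
proof
  assume eq: "vv ^ a = vv ^ b"
  have "vv ^ (max a b - min a b) = 1"
    using eq by (cases "a \<le> b") (simp_all add: power_diff)
  then show "a = b"
    by (simp add: vv_power_eq_one_iff)
qed simp

lemma inverse_vv_neq_power: "inverse vv \<noteq> vv ^ c"
proof
  assume "inverse vv = vv ^ c"
  then have "vv ^ Suc c = 1" by (simp add: field_simps)
  then show False by (simp only: vv_power_eq_one_iff)
qed

lemma vv_minus_inverse_nonzero: "vv - inverse vv \<noteq> 0"
proof
  assume "vv - inverse vv = 0"
  then have "vv ^ 2 = 1"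
    by (simp add: power2_eq_square field_simps)
  then show False
    by (simp only: vv_power_eq_one_iff)
qed

lemma vpow_eq_power_int: "vpow a = vv powi a"
  by (simp add: vpow_def power_int_def)

lemma vpow_add: "vpow (a + b) = vpow a * vpow b"
  by (simp add: vpow_eq_power_int power_int_add)

lemma vpow_minus: "vpow (- a) = inverse (vpow a)"
  by (simp add: vpow_eq_power_int power_int_minus)

lemma vpow_nonzero: "vpow a \<noteq> 0"
  by (simp add: vpow_eq_power_int)

lemma vpow_0 [simp]: "vpow 0 = 1"
  by (simp add: vpow_def)

lemma vpow_1 [simp]: "vpow 1 = vv"
  by (simp add: vpow_def)

lemma vpow_minus_1 [simp]: "vpow (-1) = inverse vv"
  by (simp add: vpow_def)

subsection \<open>Weights of commuting elements\<close>

lemma tsmult_one_commute: "tsmult c 1 * x = x * tsmult c 1"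
  by (simp add: tsmult_mult_left tsmult_mult_right)

definition rootprod :: "qv list \<Rightarrow> tfam \<Rightarrow> tfam" where
  "rootprod L z = (\<Prod>\<mu>\<leftarrow>L. z - tsmult \<mu> 1)"

lemma rootprod_Nil [simp]: "rootprod [] z = 1"
  by (simp add: rootprod_def)

lemma rootprod_Cons: "rootprod (\<mu> # L) z = (z - tsmult \<mu> 1) * rootprod L z"
  by (simp add: rootprod_def)

lemma rootprod_append: "rootprod (L @ L') z = rootprod L z * rootprod L' z"
  by (simp add: rootprod_def)

lemma root_factor_commute: "z * w = w * z \<Longrightarrow> (z - tsmult \<mu> 1) * w = w * (z - tsmult \<mu> 1)"
  by (simp add: left_diff_distrib right_diff_distrib tsmult_one_commute)

lemma root_factor_mult_eq_zero_iff: "(z - tsmult c 1) * W = 0 \<longleftrightarrow> z * W = tsmult c W"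
  by (simp add: left_diff_distrib tsmult_mult_left)

lemma rootprod_commute: "z * w = w * z \<Longrightarrow> rootprod L z * w = w * rootprod L z"
proof (induction L)
  case (Cons \<mu> L)
  then show ?case
    using root_factor_commute[OF Cons.prems, of \<mu>]
    by (simp add: rootprod_Cons mult.assoc) (simp add: mult.assoc[symmetric])
qed simp

lemma rootprod_Cons': "rootprod (\<mu> # L) z = rootprod L z * (z - tsmult \<mu> 1)"
proof -
  have "z * (z - tsmult \<mu> 1) = (z - tsmult \<mu> 1) * z"
    using root_factor_commute[of z z \<mu>] by simp
  then show ?thesis
    by (simp add: rootprod_Cons rootprod_commute)
qed

lemma rootprod_snoc:
  "rootprod (L @ [\<mu>]) z = rootprod L z * (z - tsmult \<mu> 1)"
  "rootprod (L @ [\<mu>]) z = (z - tsmult \<mu> 1) * rootprod L z"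
proof -
  show "rootprod (L @ [\<mu>]) z = rootprod L z * (z - tsmult \<mu> 1)"
    by (simp add: rootprod_append rootprod_Cons)
  also have "\<dots> = (z - tsmult \<mu> 1) * rootprod L z"
    using root_factor_commute[of z z \<mu>] by (simp add: rootprod_commute)
  finally show "rootprod (L @ [\<mu>]) z = (z - tsmult \<mu> 1) * rootprod L z" .
qed

lemma rootprod_eigen:
  assumes "z * W = tsmult l W"
  shows "rootprod L z * W = tsmult (\<Prod>\<mu>\<leftarrow>L. l - \<mu>) W"
proof (induction L)
  case (Cons \<mu> L)
  have "rootprod (\<mu> # L) z * W = tsmult (\<Prod>\<mu>\<leftarrow>L. l - \<mu>) (z * W - tsmult \<mu> W)"
    by (simp add: rootprod_Cons mult.assoc Cons.IH tsmult_mult_right left_diff_distrib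
        tsmult_mult_left tsmult_diff mult.commute)
  also have "\<dots> = tsmult (\<Prod>\<mu>\<leftarrow>\<mu> # L. l - \<mu>) W"
    by (simp add: assms tsmult_diff_left[symmetric] mult.commute)
  finally show ?case .
qed simp

lemma rootprod_eigen_eq_zero:
  assumes "rootprod L z * W = 0" and "z * W = tsmult l W" and "l \<notin> set L"
  shows "W = 0"
proof (rule tsmult_cancel)
  show "(\<Prod>\<mu>\<leftarrow>L. l - \<mu>) \<noteq> 0"
    using assms(3) by (auto simp: prod_list_zero_iff)
  show "tsmult (\<Prod>\<mu>\<leftarrow>L. l - \<mu>) W = 0"
    using assms(1) rootprod_eigen[OF assms(2)] by simp
qed

lemma rootprod_mult_eigen:
  assumes xy: "x * y = y * x" and xW: "x * W = tsmult l W"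
  shows "rootprod L (x * y) * W = rootprod L (tsmult l y) * W"
proof (induction L)
  case (Cons \<mu> L)
  define V where "V = rootprod L (tsmult l y) * W"
  have "x * V = rootprod L (tsmult l y) * (x * W)"
    unfolding V_def using rootprod_commute[of "tsmult l y" x L] xy
    by (simp add: tsmult_mult_left tsmult_mult_right mult.assoc[symmetric])
  then have "x * V = tsmult l V"
    by (simp add: xW V_def tsmult_mult_right)
  then have "x * y * V = tsmult l y * V"
    by (simp add: xy mult.assoc tsmult_mult_left tsmult_mult_right)
  then show ?case
    using Cons.IH by (simp add: rootprod_Cons mult.assoc left_diff_distrib V_def)
qed simp

lemma rootprod_smult: "rootprod (map ((*) l) L) (tsmult l y) = tsmult (l ^ length L) (rootprod L y)"
proof (induction L)
  case (Cons a L)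
  have "tsmult l y - tsmult (l * a) 1 = tsmult l (y - tsmult a 1)"
    by (simp add: tsmult_diff)
  then have "rootprod (map ((*) l) (a # L)) (tsmult l y)
      = tsmult l (y - tsmult a 1) * tsmult (l ^ length L) (rootprod L y)"
    by (simp add: rootprod_Cons Cons.IH)
  then show ?case
    by (simp add: rootprod_Cons tsmult_mult_left tsmult_mult_right mult.commute[of _ l])
qed simp

lemma rootprod_division:
  "\<exists>H. (\<forall>w. z * w = w * z \<longrightarrow> H * w = w * H) \<and>
    rootprod L z = tsmult (\<Prod>\<mu>\<leftarrow>L. l - \<mu>) 1 + H * (z - tsmult l 1)"
proof (induction L)
  case Nil
  show ?case by (rule exI[of _ 0]) simp
next
  case (Cons \<mu> L)
  then obtain H where H: "\<forall>w. z * w = w * z \<longrightarrow> H * w = w * H"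
    and eq: "rootprod L z = tsmult (\<Prod>\<mu>\<leftarrow>L. l - \<mu>) 1 + H * (z - tsmult l 1)"
    by blast
  define c where "c = (\<Prod>\<mu>\<leftarrow>L. l - \<mu>)"
  have lin: "(z - tsmult \<mu> 1) * tsmult c 1 = tsmult (c * (l - \<mu>)) 1 + tsmult c 1 * (z - tsmult l 1)"
  proof -
    have "(z - tsmult \<mu> 1) * tsmult c 1 = tsmult c z - tsmult (c * \<mu>) 1"
      by (simp add: tsmult_mult_right tsmult_diff)
    moreover have "tsmult (c * (l - \<mu>)) 1 + tsmult c 1 * (z - tsmult l 1)
        = tsmult c z - tsmult (c * \<mu>) 1"
      by (simp add: tsmult_mult_left tsmult_diff right_diff_distrib tsmult_diff_left)
    ultimately show ?thesis by simp
  qed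
  have "rootprod (\<mu> # L) z = (z - tsmult \<mu> 1) * (tsmult c 1 + H * (z - tsmult l 1))"
    by (simp add: rootprod_Cons eq c_def)
  also have "\<dots> = tsmult (c * (l - \<mu>)) 1 + (tsmult c 1 + (z - tsmult \<mu> 1) * H) * (z - tsmult l 1)"
    by (simp add: distrib_left distrib_right lin mult.assoc add.assoc)
  finally have "rootprod (\<mu> # L) z
      = tsmult (c * (l - \<mu>)) 1 + (tsmult c 1 + (z - tsmult \<mu> 1) * H) * (z - tsmult l 1)" .
  moreover have "(tsmult c 1 + (z - tsmult \<mu> 1) * H) * w = w * (tsmult c 1 + (z - tsmult \<mu> 1) * H)"
    if "z * w = w * z" for w
    using H that root_factor_commute[OF that, of \<mu>]
    by (simp add: distrib_left distrib_right tsmult_one_commute mult.assoc)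
      (simp add: mult.assoc[symmetric])
  ultimately show ?case
    unfolding c_def by (auto simp: mult.commute)
qed

lemma rootprod_coprime_annihilate:
  assumes "l \<notin> set L" and Gx: "G * x = x * G"
    and "G * (rootprod L x * W) = 0" and "G * ((x - tsmult l 1) * W) = 0"
  shows "G * W = 0"
proof -
  obtain H where H: "\<forall>w. x * w = w * x \<longrightarrow> H * w = w * H"
    and div: "rootprod L x = tsmult (\<Prod>\<mu>\<leftarrow>L. l - \<mu>) 1 + H * (x - tsmult l 1)"
    using rootprod_division by blast
  have "G * H = H * G"
    using H Gx by metis
  then have "tsmult (\<Prod>\<mu>\<leftarrow>L. l - \<mu>) (G * W)
      = G * (rootprod L x * W) - H * (G * ((x - tsmult l 1) * W))"
    by (simp add: div distrib_right distrib_left tsmult_mult_left tsmult_mult_right mult.assoc)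
      (simp add: mult.assoc[symmetric])
  then have "tsmult (\<Prod>\<mu>\<leftarrow>L. l - \<mu>) (G * W) = 0"
    using assms(3,4) by simp
  moreover have "(\<Prod>\<mu>\<leftarrow>L. l - \<mu>) \<noteq> 0"
    using assms(1) by (auto simp: prod_list_zero_iff)
  ultimately show ?thesis
    using tsmult_cancel by blast
qed

text \<open>rootprod (vpowers m) z * W = 0 says that z acts on W with weights (eigenvalues) among
  1, v, ..., v^m.\<close>

definition vpowers :: "nat \<Rightarrow> qv list" where
  "vpowers m = map (\<lambda>c. vv ^ c) [0..<m+1]"

lemma vpowers_Suc: "vpowers (Suc m) = vpowers m @ [vv ^ Suc m]"
  by (simp add: vpowers_def)

lemma vpowers_add:
  "vpowers (s + b) = map (\<lambda>c. vv ^ c) [0..<s] @ map ((*) (vv ^ s)) (vpowers b)"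
proof -
  have "[0..<s + (b + 1)] = [0..<s] @ [s..<s + (b + 1)]"
    by (rule upt_add_eq_append) simp
  also have "[s..<s + (b + 1)] = map (\<lambda>c. c + s) [0..<b + 1]"
    by (simp only: map_add_upt add.commute)
  finally show ?thesis
    by (simp add: vpowers_def power_add add.assoc mult.commute del: upt_Suc)
qed

lemma rootprod_vpowers_shift:
  "rootprod (vpowers m) (tsmult (inverse vv ^ d) y)
    = tsmult ((inverse vv ^ d) ^ (m + 1)) (rootprod (map (\<lambda>c. vv ^ (c + d)) [0..<m+1]) y)"
proof -
  have "vpowers m = map ((*) (inverse vv ^ d)) (map (\<lambda>c. vv ^ (c + d)) [0..<m+1])"
    by (simp add: vpowers_def power_add power_inverse del: upt_Suc)
  then show ?thesis
    by (simp only: rootprod_smult) simp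
qed

lemma vpowers_Cons: "vpowers m = 1 # map (\<lambda>c. vv ^ (c + 1)) [0..<m]"
  unfolding vpowers_def Suc_eq_plus1[symmetric] map_upt_Suc by simp

lemma inverse_vv_notin_vpowers: "inverse vv \<notin> set (vpowers m)"
  using inverse_vv_neq_power by (auto simp: vpowers_def simp del: upt_Suc)

lemma vpowers_weights_mult_eigen:
  assumes xy: "x * y = y * x" and xW: "x * W = tsmult (vv ^ s) W"
    and yW: "rootprod (vpowers b) y * W = 0"
  shows "rootprod (vpowers (s + b)) (x * y) * W = 0"
proof -
  have "rootprod (vpowers (s + b)) (x * y) * W = rootprod (vpowers (s + b)) (tsmult (vv ^ s) y) * W"
    by (rule rootprod_mult_eigen[OF xy xW])
  also have "\<dots> = rootprod (map (\<lambda>c. vv ^ c) [0..<s]) (tsmult (vv ^ s) y)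
      * tsmult ((vv ^ s) ^ length (vpowers b)) (rootprod (vpowers b) y * W)"
    by (simp only: vpowers_add rootprod_append rootprod_smult mult.assoc tsmult_mult_left)
  finally show ?thesis
    by (simp add: yW)
qed

lemma vpowers_weights_mult:
  assumes xy: "x * y = y * x"
  shows "rootprod (vpowers a) x * W = 0 \<Longrightarrow> rootprod (vpowers b) y * W = 0 \<Longrightarrow>
    rootprod (vpowers (a + b)) (x * y) * W = 0"
proof (induction a arbitrary: W)
  case 0
  then have "x * W = tsmult (vv ^ 0) W"
    by (simp add: vpowers_def rootprod_Cons left_diff_distrib tsmult_mult_left)
  from vpowers_weights_mult_eigen[OF xy this 0(2)] show ?case
    by simp
next
  case (Suc a W)
  define c where "c = vv ^ Suc a"
  define G where "G = rootprod (vpowers (Suc a + b)) (x * y)"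
  have x_split: "rootprod (vpowers (Suc a)) x = rootprod (vpowers a) x * (x - tsmult c 1)"
    "rootprod (vpowers (Suc a)) x = (x - tsmult c 1) * rootprod (vpowers a) x"
    unfolding vpowers_Suc c_def by (rule rootprod_snoc(1), rule rootprod_snoc(2))
  have "G * (rootprod (vpowers a) x * W) = 0"
  proof -
    have "x * (rootprod (vpowers a) x * W) = tsmult c (rootprod (vpowers a) x * W)"
      using Suc.prems(1) by (simp add: x_split(2) mult.assoc flip: root_factor_mult_eq_zero_iff)
    moreover have "rootprod (vpowers b) y * (rootprod (vpowers a) x * W) = 0"
    proof (rule mult_commute_annihilate[OF _ Suc.prems(2)])
      show "rootprod (vpowers b) y * rootprod (vpowers a) x
          = rootprod (vpowers a) x * rootprod (vpowers b) y"
        using rootprod_commute[of y x] xy by (intro rootprod_commute[symmetric]) simp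
    qed
    ultimately show ?thesis
      using vpowers_weights_mult_eigen[OF xy] unfolding G_def c_def by blast
  qed
  moreover have "G * ((x - tsmult c 1) * W) = 0"
  proof -
    have "rootprod (vpowers a) x * ((x - tsmult c 1) * W) = 0"
      using Suc.prems(1) by (simp add: x_split(1) mult.assoc)
    moreover have "rootprod (vpowers b) y * ((x - tsmult c 1) * W) = 0"
      using root_factor_commute[OF xy, of c]
      by (intro mult_commute_annihilate[OF _ Suc.prems(2)] rootprod_commute) simp
    ultimately have "rootprod (vpowers (a + b)) (x * y) * ((x - tsmult c 1) * W) = 0"
      by (rule Suc.IH)
    then show ?thesis
      unfolding G_def by (simp add: vpowers_Suc rootprod_snoc(2) mult.assoc)
  qed
  moreover have "c \<notin> set (vpowers a)"
    by (auto simp: vpowers_def c_def vv_power_inject simp del: upt_Suc power_Suc)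
  moreover have "G * x = x * G"
    unfolding G_def by (intro rootprod_commute) (metis xy mult.assoc)
  ultimately show ?case
    using rootprod_coprime_annihilate unfolding G_def by blast
qed

lemma vpowers_weights_prod_list:
  assumes "\<And>k l. k \<in> set ks \<Longrightarrow> l \<in> set ks \<Longrightarrow> x k * x l = x l * x k"
    and "\<And>k. k \<in> set ks \<Longrightarrow> rootprod (vpowers (m k)) (x k) * W = 0"
  shows "rootprod (vpowers (\<Sum>k\<leftarrow>ks. m k)) (\<Prod>k\<leftarrow>ks. x k) * W = 0"
  using assms
proof (induction ks)
  case Nil
  then show ?case
    by (simp add: vpowers_def rootprod_Cons)
next
  case (Cons k ks)
  have "x k * (\<Prod>l\<leftarrow>ks. x l) = (\<Prod>l\<leftarrow>ks. x l) * x k"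
    using Cons.prems(1) by (intro prod_list_commute) auto
  moreover have "rootprod (vpowers (m k)) (x k) * W = 0"
    using Cons.prems(2) by simp
  moreover have "rootprod (vpowers (\<Sum>l\<leftarrow>ks. m l)) (\<Prod>l\<leftarrow>ks. x l) * W = 0"
    by (rule Cons.IH) (auto intro: Cons.prems)
  ultimately show ?case
    using vpowers_weights_mult by simp
qed

subsection \<open>The idempotent 1_omega and the weights of K on it\<close>

context
  fixes n r :: nat
begin

lemma tunit_mult_rootprod:
  assumes "tunit n r * x = x"
  shows "tunit n r * rootprod L x = tunit n r * (\<Prod>\<mu>\<leftarrow>L. x - tsmult \<mu> (tunit n r))"
proof (induction L)
  case (Cons \<mu> L)
  have "tunit n r * (x - tsmult \<mu> 1) = x - tsmult \<mu> (tunit n r)"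
    by (simp add: assms right_diff_distrib tsmult_mult_right)
  then have "tunit n r * rootprod (\<mu> # L) x = (x - tsmult \<mu> (tunit n r)) * (tunit n r * rootprod L x)"
    by (metis rootprod_Cons mult.assoc tunit_central tunit_idem)
  then show ?case
    using Cons.IH by (simp add: mult.assoc[symmetric] tunit_central[of n r "x - _"])
qed simp

lemma tK_weights:
  assumes "k \<in> {1..n}" and "tunit n r * W = W"
  shows "rootprod (vpowers r) (tK n r k) * W = 0"
proof -
  have "rootprod (vpowers r) (tK n r k) * W = tunit n r * rootprod (vpowers r) (tK n r k) * W"
    using assms(2) by (metis mult.assoc tunit_central)
  also have "tunit n r * rootprod (vpowers r) (tK n r k) = 0"
    using tK_annihilator[OF assms(1)]
    by (simp add: tunit_mult_rootprod tunit_mult_generator vpowers_def comp_def del: upt_Suc)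
  finally show ?thesis by simp
qed

lemma tK_weight_vanish:
  assumes "k \<in> {1..n}" and "tunit n r * W = W" and "tK n r k * W = tsmult (inverse vv) W"
  shows "W = 0"
  using rootprod_eigen_eq_zero[OF tK_weights[OF assms(1,2)] assms(3)] inverse_vv_notin_vpowers
  by blast

definition tKbracket :: "nat \<Rightarrow> tfam" where
  "tKbracket k = tsmult (inverse (vv - inverse vv)) (tK n r k - tKi n r k)"

lemma tKbracket_commute:
  assumes "a \<in> {1..n}" "b \<in> {1..n}"
  shows "tKbracket a * tKbracket b = tKbracket b * tKbracket a"
proof -
  have "(tK n r a - tKi n r a) * (tK n r b - tKi n r b) = (tK n r b - tKi n r b) * (tK n r a - tKi n r a)"
    using tK_commute[OF assms] tKi_tK_commute[OF assms] tKi_tK_commute[OF assms(2,1)]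
      tKi_commute[OF assms]
    by (simp add: algebra_simps)
  then show ?thesis
    by (simp add: tKbracket_def tsmult_mult_left tsmult_mult_right)
qed

lemma tKbracket_weights:
  assumes "k \<in> {1..n}"
  shows "rootprod (map (\<lambda>c. vv ^ (c + 1)) [0..<r]) (tK n r k) * tKbracket k = 0"
proof -
  let ?R = "rootprod (map (\<lambda>c. vv ^ (c + 1)) [0..<r]) (tK n r k)"
  have "?R * (tK n r k - tsmult 1 1) = (tK n r k - tsmult 1 1) * ?R"
    by (rule rootprod_commute) (rule root_factor_commute[symmetric], rule refl)
  also have "\<dots> = rootprod (vpowers r) (tK n r k)"
    by (simp add: vpowers_Cons rootprod_Cons)
  moreover have "tK n r k - tKi n r k = (tK n r k - tsmult 1 1) * (tunit n r + tKi n r k)"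
    using tK_tKi[OF assms] generator_mult_tunit[of n r]
    by (simp add: algebra_simps)
  moreover have "rootprod (vpowers r) (tK n r k) * (tunit n r + tKi n r k) = 0"
    by (rule tK_weights[OF assms]) (simp add: distrib_left tunit_idem tunit_mult_generator)
  ultimately show ?thesis
    by (simp add: tKbracket_def tsmult_mult_right mult.assoc[symmetric])
qed

definition tone_omega :: tfam where
  "tone_omega = tunit n r * (\<Prod>k\<leftarrow>[1..<r+1]. tKbracket k)"

lemma tunit_mult_tone_omega: "tunit n r * tone_omega = tone_omega"
  by (simp add: tone_omega_def mult.assoc[symmetric] tunit_idem)

lemma tone_omega_tK_weights:
  assumes "r \<le> n" and "k \<in> {1..r}"
  shows "rootprod (map (\<lambda>c. vv ^ (c + 1)) [0..<r]) (tK n r k) * tone_omega = 0"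
proof -
  have k: "k \<in> {1..n}"
    using assms by auto
  have "(\<Prod>l\<leftarrow>[1..<r+1]. tKbracket l) = tKbracket k * (\<Prod>l\<leftarrow>remove1 k [1..<r+1]. tKbracket l)"
    using assms tKbracket_commute[OF k] by (intro prod_list_map_eq_mult_remove1) auto
  then have "rootprod (map (\<lambda>c. vv ^ (c + 1)) [0..<r]) (tK n r k) * tone_omega
      = tunit n r * (rootprod (map (\<lambda>c. vv ^ (c + 1)) [0..<r]) (tK n r k) * tKbracket k)
        * (\<Prod>l\<leftarrow>remove1 k [1..<r+1]. tKbracket l)"
    unfolding tone_omega_def by (simp add: mult.assoc tunit_central[of n r])
  then show ?thesis
    by (simp only: tKbracket_weights[OF k] mult_zero_left mult_zero_right)
qed

text \<open>The part of 1_omega on which K_j is not v: there every K_k has weights in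
  {v^d_k, ..., v^r}, with d_k the lowest weight exponent.\<close>

lemma tK_shifted_weights:
  assumes "2 \<le> r" and "r \<le> n" and j: "j \<in> {1..r}" and k: "k \<in> {1..n}"
  defines "d \<equiv> of_bool (k \<le> r) + of_bool (k = j)"
  shows "rootprod (vpowers (r - d)) (tsmult (inverse vv ^ d) (tK n r k))
    * ((tK n r j - tsmult vv 1) * tone_omega) = 0"
proof -
  have jn: "j \<in> {1..n}"
    using assms by auto
  have Z_commute: "R * (tK n r j - tsmult vv 1) = (tK n r j - tsmult vv 1) * R"
    if "R = rootprod L (tK n r k)" for R L
    unfolding that by (intro rootprod_commute root_factor_commute[symmetric] tK_commute jn k)
  have "rootprod (map (\<lambda>c. vv ^ (c + d)) [0..<r - d + 1]) (tK n r k)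
      * ((tK n r j - tsmult vv 1) * tone_omega) = 0"
  proof (cases "k \<le> r")
    case False
    then have "d = 0"
      using j by (auto simp: d_def)
    moreover have "tunit n r * ((tK n r j - tsmult vv 1) * tone_omega) = (tK n r j - tsmult vv 1) * tone_omega"
      using tunit_mult_tone_omega by (metis mult.assoc tunit_central)
    ultimately show ?thesis
      using tK_weights[OF k] by (simp add: vpowers_def del: upt_Suc)
  next
    case True
    show ?thesis
    proof (cases "k = j")
      case False
      then have "d = 1"
        using True by (simp add: d_def)
      then show ?thesis
        using tone_omega_tK_weights[OF assms(2), of k] True k Z_commute[OF refl]
        by (simp add: mult.assoc[symmetric] del: upt_Suc) (simp add: mult.assoc)
    next
      case True
      then have "d = 2"
        using j by (simp add: d_def)
      moreover have "map (\<lambda>c. vv ^ (c + 1)) [0..<r] = vv # map (\<lambda>c. vv ^ (c + 2)) [0..<r - 1]"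
        using assms(1) by (cases r) (simp_all add: map_upt_Suc del: upt_Suc)
      ultimately show ?thesis
        using tone_omega_tK_weights[OF assms(2) j] assms(1) True
        by (simp add: rootprod_Cons' mult.assoc Suc_diff_Suc numeral_2_eq_2 del: upt_Suc)
    qed
  qed
  then show ?thesis
    by (simp add: rootprod_vpowers_shift tsmult_mult_left del: upt_Suc)
qed

lemma sum_lowest_weight_exponents:
  assumes "r \<le> n" and "j \<in> {1..r}"
  shows "(\<Sum>k\<leftarrow>[1..<n+1]. of_bool (k \<le> r) + of_bool (k = j)) = r + 1"
proof -
  have "(\<Sum>k\<leftarrow>[1..<n+1]. of_bool (k \<le> r) + of_bool (k = j))
      = (\<Sum>k\<in>{1..n}. of_bool (k \<le> r) + of_bool (k = j))"
    by (simp only: interv_sum_list_conv_sum_set_nat set_upt Suc_eq_plus1[symmetric]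
        atLeastLessThanSuc_atLeastAtMost)
  also have "\<dots> = card ({1..n} \<inter> {k. k \<le> r}) + card ({1..n} \<inter> {k. k = j})"
    by (simp only: sum.distrib finite_atLeastAtMost sum_of_bool_eq of_nat_id)
  also have "{1..n} \<inter> {k. k \<le> r} = {1..r}"
    using assms by auto
  also have "{1..n} \<inter> {k. k = j} = {j}"
    using assms by auto
  finally show ?thesis
    by simp
qed

text \<open>Rescaled by v^-d_k, the K_k have weights in {1, v, ...} on the part of 1_omega where K_j is
  not v; so does their product, which by K_1 ... K_n = v^r is the scalar v^-1. Hence that part
  vanishes.\<close>

lemma tK_tone_omega:
  assumes "2 \<le> r" and "r \<le> n" and j: "j \<in> {1..r}"
  shows "tK n r j * tone_omega = tsmult vv tone_omega"
proof -
  define Z where "Z = (tK n r j - tsmult vv 1) * tone_omega"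
  define d :: "nat \<Rightarrow> nat" where "d k = of_bool (k \<le> r) + of_bool (k = j)" for k
  have "rootprod (vpowers (\<Sum>k\<leftarrow>[1..<n+1]. r - d k))
      (\<Prod>k\<leftarrow>[1..<n+1]. tsmult (inverse vv ^ d k) (tK n r k)) * Z = 0"
  proof (rule vpowers_weights_prod_list)
    fix k l
    assume "k \<in> set [1..<n+1]" "l \<in> set [1..<n+1]"
    then have "tK n r k * tK n r l = tK n r l * tK n r k"
      by (intro tK_commute) auto
    then show "tsmult (inverse vv ^ d k) (tK n r k) * tsmult (inverse vv ^ d l) (tK n r l)
        = tsmult (inverse vv ^ d l) (tK n r l) * tsmult (inverse vv ^ d k) (tK n r k)"
      by (simp add: tsmult_mult_left tsmult_mult_right mult.commute)
  next
    fix k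
    assume "k \<in> set [1..<n+1]"
    then show "rootprod (vpowers (r - d k)) (tsmult (inverse vv ^ d k) (tK n r k)) * Z = 0"
      unfolding Z_def d_def by (intro tK_shifted_weights[OF assms]) auto
  qed
  moreover have "(\<Prod>k\<leftarrow>[1..<n+1]. tsmult (inverse vv ^ d k) (tK n r k)) * Z = tsmult (inverse vv) Z"
  proof -
    have "(\<Prod>k\<leftarrow>[1..<n+1]. tsmult (inverse vv ^ d k) (tK n r k))
        = tsmult (inverse vv ^ (r + 1)) (\<Prod>k\<leftarrow>[1..<n+1]. tK n r k)"
      using sum_lowest_weight_exponents[OF assms(2,3)]
      by (simp add: prod_list_tsmult power_sum_list d_def del: upt_Suc)
    moreover have "(\<Prod>k\<leftarrow>[1..<n+1]. tK n r k) * Z = tsmult (vv ^ r) Z"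
      using tK_prod[of n r] tunit_mult_tone_omega unfolding Z_def
      by (metis mult.assoc tunit_central tsmult_mult_left)
    ultimately show ?thesis
      by (simp add: tsmult_mult_left power_inverse field_simps)
  qed
  ultimately have "Z = 0"
    using rootprod_eigen_eq_zero inverse_vv_notin_vpowers by blast
  then show ?thesis
    by (simp add: Z_def left_diff_distrib tsmult_mult_left)
qed

end

subsection \<open>Weights of monomials in the E_k\<close>

lemma wrap_succ: "j + 1 \<le> n \<Longrightarrow> wrap n (int j + 1) = j + 1"
  by (simp add: wrap_def)

lemma wrap_pred: "1 \<le> j \<Longrightarrow> j \<le> n \<Longrightarrow> wrap n (int j - 1) = (if j = 1 then n else j - 1)"
  by (auto simp: wrap_def of_nat_diff zmod_minus1)

definition Kweight :: "nat \<Rightarrow> nat \<Rightarrow> nat list \<Rightarrow> int" where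
  "Kweight n m ks = (\<Sum>k\<leftarrow>ks. epsp n m k)"

lemma Kweight_append: "Kweight n m (ks @ ls) = Kweight n m ks + Kweight n m ls"
  by (simp add: Kweight_def)

lemma Kweight_distinct:
  "distinct ks \<Longrightarrow> m \<noteq> wrap n (int m - 1) \<Longrightarrow>
    Kweight n m ks = of_bool (m \<in> set ks) - of_bool (wrap n (int m - 1) \<in> set ks)"
  unfolding Kweight_def by (induction ks) (auto simp: epsp_def)

context
  fixes n r :: nat
begin

definition Eword :: "nat list \<Rightarrow> tfam" where
  "Eword ks = (\<Prod>k\<leftarrow>ks. tE n r k)"

lemma Eword_append: "Eword (ks @ ls) = Eword ks * Eword ls"
  by (simp add: Eword_def)

lemma tK_Eword:
  assumes "m \<in> {1..n}" and "set ks \<subseteq> {1..n}"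
  shows "tK n r m * Eword ks = tsmult (vpow (Kweight n m ks)) (Eword ks * tK n r m)"
  using assms(2)
proof (induction ks)
  case (Cons k ks)
  have "tK n r m * Eword (k # ks) = (tK n r m * tE n r k) * Eword ks"
    by (simp add: Eword_def mult.assoc)
  also have "\<dots> = tsmult (vpow (epsp n m k)) (tE n r k * (tK n r m * Eword ks))"
    using tK_tE[OF assms(1), of k] Cons.prems by (simp add: tsmult_mult_left mult.assoc)
  also have "\<dots> = tsmult (vpow (Kweight n m (k # ks))) (Eword (k # ks) * tK n r m)"
    using Cons by (simp add: Eword_def Kweight_def vpow_add tsmult_mult_right mult.assoc)
  finally show ?case .
qed (simp add: Eword_def Kweight_def)

lemma tunit_mult_Eword_tone_omega: "tunit n r * (Eword ks * tone_omega n r) = Eword ks * tone_omega n r"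
  by (metis mult.assoc tunit_central tunit_mult_tone_omega)

lemma tK_Eword_tone_omega:
  assumes "2 \<le> r" and "r \<le> n" and "m \<in> {1..r}" and "set ks \<subseteq> {1..n}"
  shows "tK n r m * (Eword ks * tone_omega n r)
    = tsmult (vpow (Kweight n m ks + 1)) (Eword ks * tone_omega n r)"
proof -
  have "m \<in> {1..n}"
    using assms by auto
  then show ?thesis
    using tK_Eword[of m ks] tK_tone_omega[OF assms(1-3)] assms(4)
    by (simp add: mult.assoc[symmetric] tsmult_mult_left) (simp add: mult.assoc tsmult_mult_right vpow_add)
qed

lemma Eword_tone_omega_eq_zero:
  assumes "2 \<le> r" and "r \<le> n" and "m \<in> {1..r}" and "set ks \<subseteq> {1..n}"
    and "Kweight n m ks = -2"
  shows "Eword ks * tone_omega n r = 0"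
proof (rule tK_weight_vanish)
  show "m \<in> {1..n}"
    using assms by auto
  show "tunit n r * (Eword ks * tone_omega n r) = Eword ks * tone_omega n r"
    by (rule tunit_mult_Eword_tone_omega)
  show "tK n r m * (Eword ks * tone_omega n r) = tsmult (inverse vv) (Eword ks * tone_omega n r)"
    using tK_Eword_tone_omega[OF assms(1-4)] assms(5) by simp
qed

lemma tKi_eigen:
  assumes "m \<in> {1..n}" and "tunit n r * W = W" and "tK n r m * W = tsmult c W" and "c \<noteq> 0"
  shows "tKi n r m * W = tsmult (inverse c) W"
proof -
  have "W = tKi n r m * tK n r m * W"
    using tKi_tK[OF assms(1)] assms(2) by simp
  also have "\<dots> = tsmult c (tKi n r m * W)"
    using assms(3) by (simp add: mult.assoc tsmult_mult_right)
  finally have "tsmult (inverse c) W = tsmult (inverse c * c) (tKi n r m * W)"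
    by (metis tsmult_tsmult)
  then show ?thesis
    using assms(4) by simp
qed

definition tH :: "nat \<Rightarrow> tfam" where
  "tH m = tsmult (inverse (vv - inverse vv))
    (tK n r m * tKi n r (m + 1) - tKi n r m * tK n r (m + 1))"

lemma tE_tF_eq_tF_tE_plus_tH:
  "m \<in> {1..n} \<Longrightarrow> m + 1 \<le> n \<Longrightarrow> tE n r m * tF n r m = tF n r m * tE n r m + tH m"
  using tE_tF_same[of m n r] wrap_succ[of m n] by (simp add: tH_def algebra_simps)

lemma tH_Eword_tone_omega:
  assumes "2 \<le> r" and "r \<le> n" and "m \<in> {1..r}" and "m + 1 \<in> {1..r}" and "set ks \<subseteq> {1..n}"
  defines "s \<equiv> Kweight n m ks - Kweight n (m + 1) ks"
  shows "tH m * (Eword ks * tone_omega n r)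
    = tsmult (inverse (vv - inverse vv) * (vpow s - vpow (- s))) (Eword ks * tone_omega n r)"
proof -
  define W where "W = Eword ks * tone_omega n r"
  define a where "a = vpow (Kweight n m ks + 1)"
  define b where "b = vpow (Kweight n (m + 1) ks + 1)"
  have mn: "m \<in> {1..n}" "m + 1 \<in> {1..n}"
    using assms by auto
  have tunit_W: "tunit n r * W = W"
    unfolding W_def by (rule tunit_mult_Eword_tone_omega)
  have K1: "tK n r m * W = tsmult a W" and K2: "tK n r (m + 1) * W = tsmult b W"
    unfolding W_def a_def b_def using tK_Eword_tone_omega assms(1-5) by blast+
  have Ki1: "tKi n r m * W = tsmult (inverse a) W"
    using tKi_eigen[OF mn(1) tunit_W K1] by (simp add: a_def vpow_nonzero)
  have Ki2: "tKi n r (m + 1) * W = tsmult (inverse b) W"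
    using tKi_eigen[OF mn(2) tunit_W K2] by (simp add: b_def vpow_nonzero)
  have "tH m * W = tsmult (inverse (vv - inverse vv))
      (tK n r m * (tKi n r (m + 1) * W) - tKi n r m * (tK n r (m + 1) * W))"
    by (simp only: tH_def tsmult_mult_left left_diff_distrib mult.assoc)
  also have "\<dots> = tsmult (inverse (vv - inverse vv) * (a * inverse b - inverse a * b)) W"
    by (simp only: Ki1 Ki2 K1 K2 tsmult_mult_right tsmult_tsmult tsmult_diff_left[symmetric]
        mult.commute[of "inverse b"] mult.commute[of b])
  also have "a * inverse b - inverse a * b = vpow s - vpow (- s)"
    by (simp add: a_def b_def s_def vpow_minus[symmetric] vpow_add[symmetric])
  finally show ?thesis
    unfolding W_def .
qed

lemma tF_Eword_commute:
  assumes "m \<in> {1..n}" and "set ks \<subseteq> {1..n}" and "m \<notin> set ks"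
  shows "tF n r m * Eword ks = Eword ks * tF n r m"
  unfolding Eword_def using assms
  by (intro prod_list_commute) (auto intro!: tE_tF_commute[symmetric])

lemma tE_Eword_commute:
  assumes "m \<in> {1..n}" and "set ks \<subseteq> {1..n}" and "\<And>k. k \<in> set ks \<Longrightarrow> \<not> adj n m k"
  shows "tE n r m * Eword ks = Eword ks * tE n r m"
  unfolding Eword_def using assms
  by (intro prod_list_commute) (auto intro!: tE_commute)

lemma tK_tF_tE_commute:
  assumes "k \<in> {1..n}" and "j \<in> {1..n}"
  shows "tK n r k * (tF n r j * tE n r j) = (tF n r j * tE n r j) * tK n r k"
proof -
  have "tK n r k * (tF n r j * tE n r j)
      = tsmult (vpow (- epsp n k j) * vpow (epsp n k j)) (tF n r j * tE n r j * tK n r k)"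
    using tK_tF[OF assms] tK_tE[OF assms]
    by (simp add: mult.assoc[symmetric] tsmult_mult_left) (simp add: mult.assoc tsmult_mult_right)
  then show ?thesis
    by (simp add: vpow_minus vpow_nonzero)
qed

lemma tKi_tF_tE_commute:
  assumes "k \<in> {1..n}" and "j \<in> {1..n}"
  shows "tKi n r k * (tF n r j * tE n r j) = (tF n r j * tE n r j) * tKi n r k"
proof -
  define X where "X = tF n r j * tE n r j"
  have "tKi n r k * X = tKi n r k * X * (tK n r k * tKi n r k)"
    using tK_tKi[OF assms(1)] generator_mult_tunit by (simp add: X_def mult.assoc)
  also have "\<dots> = tKi n r k * (tK n r k * X) * tKi n r k"
    using tK_tF_tE_commute[OF assms] by (simp add: X_def mult.assoc)
  also have "\<dots> = X * tKi n r k"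
    using tKi_tK[OF assms(1)] tunit_mult_generator by (simp add: X_def mult.assoc[symmetric])
  finally show ?thesis
    unfolding X_def .
qed

lemma tone_omega_tF_tE_commute:
  assumes "r \<le> n" and "j \<in> {1..n}"
  shows "tone_omega n r * (tF n r j * tE n r j) = (tF n r j * tE n r j) * tone_omega n r"
proof -
  have "(tF n r j * tE n r j) * (\<Prod>k\<leftarrow>[1..<r+1]. tKbracket n r k)
      = (\<Prod>k\<leftarrow>[1..<r+1]. tKbracket n r k) * (tF n r j * tE n r j)"
  proof (rule prod_list_commute)
    fix y assume "y \<in> set (map (tKbracket n r) [1..<r+1])"
    then obtain k where "k \<in> set [1..<r+1]" "y = tKbracket n r k"
      by (auto simp del: upt_Suc)
    moreover from this(1) have "k \<in> {1..n}"
      using assms by auto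
    ultimately show "tF n r j * tE n r j * y = y * (tF n r j * tE n r j)"
      using tK_tF_tE_commute[of k j] tKi_tF_tE_commute[of k j] assms
      by (simp add: tKbracket_def tsmult_mult_left tsmult_mult_right left_diff_distrib
          right_diff_distrib)
  qed
  then show ?thesis
    unfolding tone_omega_def by (metis tunit_central mult.assoc)
qed

end

subsection \<open>The commutation relation for M\<close>

context
  fixes n r i :: nat
  assumes i_gt_1: "1 < i" and i_lt_r: "i < r" and r_lt_n: "r < n"
begin

abbreviation (input) "lo \<equiv> rev [1..<i-1]"
abbreviation (input) "hi \<equiv> rev [i+1..<r]"
abbreviation (input) "tail \<equiv> [r+1..<n+1]"
abbreviation (input) "P \<equiv> tone_omega n r"
abbreviation (input) "E \<equiv> tE n r"
abbreviation (input) "F \<equiv> tF n r"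
abbreviation (input) "H \<equiv> tH n r"
abbreviation (input) "Ew \<equiv> Eword n r"

lemma rev_upt_split: "rev [1..<r] = hi @ [i, i - 1] @ lo"
proof -
  have "[1..<r] = [1..<i-1] @ [i-1..<r]"
    using i_gt_1 i_lt_r upt_add_eq_append[of 1 "i-1" "r - (i-1)"] by simp
  also have "[i-1..<r] = [i-1, i] @ [i+1..<r]"
    using i_gt_1 i_lt_r by (simp add: upt_conv_Cons)
  finally show ?thesis
    by simp
qed

lemma pred_indices:
  "wrap n (int (i - 1) - 1) = (if i = 2 then n else i - 2)"
  "wrap n (int i - 1) = i - 1" "wrap n (int (i + 1) - 1) = i"
proof -
  show "wrap n (int (i - 1) - 1) = (if i = 2 then n else i - 2)"
    using wrap_pred[of "i - 1" n] i_gt_1 i_lt_r r_lt_n by auto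
  show "wrap n (int i - 1) = i - 1"
    using wrap_pred[of i n] i_gt_1 i_lt_r r_lt_n by auto
  show "wrap n (int (i + 1) - 1) = i"
    using wrap_pred[of "i + 1" n] i_gt_1 i_lt_r r_lt_n by auto
qed

lemma Kweights:
  "Kweight n (i - 1) (hi @ [i, i - 1] @ lo @ tail) = 0"
  "Kweight n i (hi @ [i, i - 1] @ lo @ tail) = 0"
  "Kweight n (i - 1) (lo @ tail) = -1"
  "Kweight n i (lo @ tail) = 0"
  "Kweight n (i + 1) ([i - 1] @ lo @ tail @ [i]) = -1"
  "Kweight n i ([i - 1] @ lo @ tail @ [i]) = 0"
proof -
  define p where "p = (if i = 2 then n else i - 2)"
  have p: "p \<in> set (lo @ tail)" "p \<noteq> i - 1" "p \<noteq> i" "p \<notin> set hi"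
    using i_gt_1 i_lt_r r_lt_n by (auto simp: p_def)
  have distinct: "distinct (hi @ [i, i - 1] @ lo @ tail)" "distinct ([i - 1] @ lo @ tail @ [i])"
    "distinct (lo @ tail)"
    using i_gt_1 i_lt_r by auto
  have neq: "i - 1 \<noteq> i" "i + 1 \<noteq> i"
    using i_gt_1 by auto
  note pred = pred_indices(1)[folded p_def] pred_indices(2,3)
  have mem: "i - 1 \<notin> set (lo @ tail)" "i \<notin> set (lo @ tail)" "i + 1 \<notin> set (lo @ tail)"
    using i_gt_1 i_lt_r by auto
  have mem_all: "i - 1 \<in> set (hi @ [i, i - 1] @ lo @ tail)" "i \<in> set (hi @ [i, i - 1] @ lo @ tail)"
    "p \<in> set (hi @ [i, i - 1] @ lo @ tail)"
    using p(1) by auto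
  have mem_V: "i \<in> set ([i - 1] @ lo @ tail @ [i])" "i - 1 \<in> set ([i - 1] @ lo @ tail @ [i])"
    "i + 1 \<notin> set ([i - 1] @ lo @ tail @ [i])"
    using mem(3) neq by auto
  show "Kweight n (i - 1) (hi @ [i, i - 1] @ lo @ tail) = 0"
    using Kweight_distinct[OF distinct(1), of "i - 1" n, unfolded pred] p(2)
    by (simp only: mem_all; simp)
  show "Kweight n i (hi @ [i, i - 1] @ lo @ tail) = 0"
    using Kweight_distinct[OF distinct(1), of i n, unfolded pred] neq(1)
    by (simp only: mem_all; simp)
  show "Kweight n (i - 1) (lo @ tail) = -1"
    using Kweight_distinct[OF distinct(3), of "i - 1" n, unfolded pred] p(1,2) mem(1)
    by (simp only: p(1) mem(1); simp)
  show "Kweight n i (lo @ tail) = 0"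
    using Kweight_distinct[OF distinct(3), of i n, unfolded pred] neq(1) mem(1,2)
    by (simp only: mem(1,2); simp)
  show "Kweight n (i + 1) ([i - 1] @ lo @ tail @ [i]) = -1"
    using Kweight_distinct[OF distinct(2), of "i + 1" n, unfolded pred] neq(2)
    by (simp only: mem_V; simp)
  show "Kweight n i ([i - 1] @ lo @ tail @ [i]) = 0"
    using Kweight_distinct[OF distinct(2), of i n, unfolded pred] neq(1)
    by (simp only: mem_V; simp)
qed

lemma index_facts:
  "i - 1 \<in> {1..r}" "i \<in> {1..r}" "i + 1 \<in> {1..r}" "r \<le> n" "2 \<le> r"
  "i - 1 \<in> {1..n}" "i \<in> {1..n}" "i + 1 \<le> n" "i - 1 + 1 = i"
  "set (hi @ [i, i - 1] @ lo @ tail) \<subseteq> {1..n}" "set (lo @ tail) \<subseteq> {1..n}"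
  "set ([i - 1] @ lo @ tail @ [i]) \<subseteq> {1..n}" "set hi \<subseteq> {1..n}" "i \<le> n"
  using i_gt_1 i_lt_r r_lt_n by auto

lemma tone_omega_tF_pred_vanish: "Ew (lo @ tail) * (F (i - 1) * P) = 0"
proof (rule tK_weight_vanish)
  show "i - 1 \<in> {1..n}"
    by (rule index_facts(6))
  have "tunit n r * (F (i - 1) * P) = F (i - 1) * P"
    by (simp add: mult.assoc[symmetric] tunit_mult_generator)
  then show "tunit n r * (Ew (lo @ tail) * (F (i - 1) * P)) = Ew (lo @ tail) * (F (i - 1) * P)"
    by (metis mult.assoc tunit_central)
  have "tK n r (i - 1) * (F (i - 1) * P) = tsmult (inverse vv * vv) (F (i - 1) * P)"
    using tK_tF[OF index_facts(6,6), of r] tK_tone_omega[OF index_facts(5,4,1)]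
    by (simp add: epsp_def mult.assoc[symmetric] tsmult_mult_left) (simp add: mult.assoc tsmult_mult_right)
  then show "tK n r (i - 1) * (Ew (lo @ tail) * (F (i - 1) * P))
      = tsmult (inverse vv) (Ew (lo @ tail) * (F (i - 1) * P))"
    using tK_Eword[OF index_facts(6,11)] Kweights(3)
    by (simp add: mult.assoc[symmetric] tsmult_mult_left) (simp add: mult.assoc tsmult_mult_right)
qed

lemma Eword_split: "Ew (hi @ [i, i - 1] @ lo @ tail) = Ew hi * E i * E (i - 1) * Ew (lo @ tail)"
  by (simp add: Eword_append Eword_def mult.assoc)

lemma tH_pred_mult_tone_omega: "H (i - 1) * (Ew (lo @ tail) * P) = - (Ew (lo @ tail) * P)"
proof -
  have "inverse (vv - inverse vv) * (vpow (-1 - 0) - vpow (- (-1 - 0))) = -1"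
    using vv_minus_inverse_nonzero by (simp add: field_simps)
  then show ?thesis
    using tH_Eword_tone_omega[OF index_facts(5,4,1), unfolded index_facts(9), OF index_facts(2,11)]
    by (simp only: Kweights(3,4) tsmult_minus_one)
qed

lemma tF_pred_mult_M:
  "F (i - 1) * (Ew (hi @ [i, i - 1] @ lo @ tail) * P) = Ew hi * E i * (Ew (lo @ tail) * P)"
proof -
  define A where "A = Ew hi"
  define W where "W = Ew (lo @ tail) * P"
  have FA: "F (i - 1) * A = A * F (i - 1)"
    unfolding A_def using index_facts by (intro tF_Eword_commute) auto
  have FE: "F (i - 1) * E i = E i * F (i - 1)"
    using tE_tF_commute[OF index_facts(7,6)] i_gt_1 by simp
  have FW: "F (i - 1) * W = 0"
  proof -
    have "i - 1 \<notin> set (lo @ tail)"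
      using i_gt_1 i_lt_r by auto
    from tF_Eword_commute[OF index_facts(6,11) this] have "F (i - 1) * W = Ew (lo @ tail) * (F (i - 1) * P)"
      unfolding W_def by (simp only: mult.assoc[symmetric])
    then show ?thesis
      by (simp only: tone_omega_tF_pred_vanish)
  qed
  have HW: "H (i - 1) * W = - W"
    unfolding W_def by (rule tH_pred_mult_tone_omega)
  have "F (i - 1) * (Ew (hi @ [i, i - 1] @ lo @ tail) * P) = (F (i - 1) * A) * E i * E (i - 1) * W"
    by (simp only: Eword_split A_def W_def mult.assoc)
  also have "\<dots> = A * E i * (F (i - 1) * E (i - 1)) * W"
    by (simp only: FA mult.assoc FE)
  also have "\<dots> = A * E i * (E (i - 1) * (F (i - 1) * W) - H (i - 1) * W)"
  proof -
    have "F (i - 1) * E (i - 1) = E (i - 1) * F (i - 1) - H (i - 1)"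
      using tE_tF_eq_tF_tE_plus_tH[OF index_facts(6), unfolded index_facts(9), OF index_facts(14)]
      by (simp add: algebra_simps)
    then show ?thesis
      by (simp only: left_diff_distrib right_diff_distrib mult.assoc)
  qed
  also have "\<dots> = A * E i * W"
    by (simp only: FW HW mult_zero_right diff_0 minus_minus)
  finally show ?thesis
    by (simp only: A_def W_def mult.assoc)
qed

lemma tF_tE_pred: "F (i - 1) * E (i - 1) = E (i - 1) * F (i - 1) - H (i - 1)"
  using tE_tF_eq_tF_tE_plus_tH[OF index_facts(6), unfolded index_facts(9), OF index_facts(14)]
  by (simp add: algebra_simps)

lemma tF_tE_pred_mult_M:
  "F (i - 1) * E (i - 1) * (Ew (hi @ [i, i - 1] @ lo @ tail) * P)
    = E (i - 1) * (Ew hi * E i * (Ew (lo @ tail) * P))"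
proof -
  have "inverse (vv - inverse vv) * (vpow (0 - 0) - vpow (- (0 - 0))) = 0"
    by simp
  then have "H (i - 1) * (Ew (hi @ [i, i - 1] @ lo @ tail) * P) = 0"
    using tH_Eword_tone_omega[OF index_facts(5,4,1), unfolded index_facts(9), OF index_facts(2,10)]
    by (simp only: Kweights(1,2) tsmult_zero_left)
  then show ?thesis
    by (simp only: tF_tE_pred left_diff_distrib mult.assoc tF_pred_mult_M diff_0_right)
qed

lemma tE_mult_tone_omega_vanish: "E i * (Ew ([i - 1] @ lo @ tail @ [i]) * P) = 0"
proof -
  have "epsp n (i + 1) i = -1"
    using pred_indices(3) by (simp add: epsp_def)
  then have "Kweight n (i + 1) (i # [i - 1] @ lo @ tail @ [i]) = -2"
    using Kweights(5) by (simp only: Kweight_append[of n _ "[i]", simplified] Kweight_def) simp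
  then have "Ew (i # [i - 1] @ lo @ tail @ [i]) * P = 0"
    using index_facts by (intro Eword_tone_omega_eq_zero[where m = "i + 1"]) auto
  then show ?thesis
    by (simp add: Eword_def mult.assoc)
qed

lemma tH_mult_tone_omega: "H i * (Ew ([i - 1] @ lo @ tail @ [i]) * P) = Ew ([i - 1] @ lo @ tail @ [i]) * P"
proof -
  have "inverse (vv - inverse vv) * (vpow (0 - -1) - vpow (- (0 - -1))) = 1"
    using vv_minus_inverse_nonzero by (simp add: field_simps)
  then show ?thesis
    using tH_Eword_tone_omega[OF index_facts(5,4,2,3,12)] by (simp only: Kweights(5,6) tsmult_one)
qed

lemma M_mult_tF_tE:
  "Ew (hi @ [i, i - 1] @ lo @ tail) * P * (F i * E i) = Ew hi * E (i - 1) * (Ew (lo @ tail) * (E i * P))"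
proof -
  define X where "X = Ew ([i - 1] @ lo @ tail @ [i]) * P"
  have X_eq: "X = E (i - 1) * Ew (lo @ tail) * E i * P"
    by (simp add: X_def Eword_def mult.assoc)
  have F_commute: "E (i - 1) * (Ew (lo @ tail) * (F i * Y)) = F i * (E (i - 1) * (Ew (lo @ tail) * Y))"
    for Y
  proof -
    have "i \<notin> set ([i - 1] @ lo @ tail)"
      using i_gt_1 i_lt_r by auto
    from tF_Eword_commute[OF index_facts(7) _ this] have "E (i - 1) * Ew (lo @ tail) * F i = F i * E (i - 1) * Ew (lo @ tail)"
      using index_facts by (simp add: Eword_def mult.assoc)
    then show ?thesis
      by (simp only: mult.assoc[symmetric])
  qed
  have "Ew (hi @ [i, i - 1] @ lo @ tail) * P * (F i * E i)
      = Ew hi * E i * (E (i - 1) * (Ew (lo @ tail) * (F i * (E i * P))))"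
  proof -
    have "P * (F i * E i) = F i * (E i * P)"
      using tone_omega_tF_tE_commute[OF index_facts(4,7)] by (simp add: mult.assoc)
    then show ?thesis
      by (simp only: Eword_split mult.assoc)
  qed
  also have "\<dots> = Ew hi * (E i * F i) * X"
    by (simp only: F_commute X_eq mult.assoc)
  also have "\<dots> = Ew hi * (F i * (E i * X) + H i * X)"
    using tE_tF_eq_tF_tE_plus_tH[OF index_facts(7,8)] by (simp add: distrib_left distrib_right mult.assoc)
  also have "\<dots> = Ew hi * X"
    by (simp only: X_def tE_mult_tone_omega_vanish tH_mult_tone_omega mult_zero_right add_0)
  finally show ?thesis
    by (simp add: X_eq mult.assoc)
qed

lemma tE_commutations:
  "E (i - 1) * (Ew hi * Y) = Ew hi * (E (i - 1) * Y)"
  "E i * (Ew (lo @ tail) * Y) = Ew (lo @ tail) * (E i * Y)"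
proof -
  have "wrap n (int (i - 1) + 1) = i" "wrap n (int i + 1) = i + 1"
    using wrap_succ[of "i - 1" n] wrap_succ[of i n] index_facts(9,14) i_lt_r r_lt_n by auto
  then have "\<not> adj n (i - 1) k" if "k \<in> set hi" for k
    using that pred_indices(1) i_gt_1 i_lt_r r_lt_n by (auto simp: adj_def)
  moreover have "\<not> adj n i k" if "k \<in> set (lo @ tail)" for k
    using that pred_indices(2) \<open>wrap n (int i + 1) = i + 1\<close> i_gt_1 i_lt_r r_lt_n
    by (auto simp: adj_def)
  ultimately have "E (i - 1) * Ew hi = Ew hi * E (i - 1)" "E i * Ew (lo @ tail) = Ew (lo @ tail) * E i"
    using index_facts by (auto intro!: tE_Eword_commute)
  then show "E (i - 1) * (Ew hi * Y) = Ew hi * (E (i - 1) * Y)"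
    "E i * (Ew (lo @ tail) * Y) = Ew (lo @ tail) * (E i * Y)"
    by (simp_all only: mult.assoc[symmetric])
qed

lemma tF_tE_mult_M:
  defines "M \<equiv> Ew (rev [1..<r]) * Ew tail * P"
  shows "F (i - 1) * E (i - 1) * M = M * (F i * E i)"
proof -
  have "M = Ew (hi @ [i, i - 1] @ lo @ tail) * P"
    unfolding M_def rev_upt_split by (simp only: Eword_append append_assoc mult.assoc)
  then show ?thesis
    using tF_tE_pred_mult_M M_mult_tF_tE by (simp only: mult.assoc tE_commutations)
qed

end

lemma one_lam_omega:
  assumes "r \<le> n"
  shows "one_lam n (omega r)
    = fa_prod (map (\<lambda>k. fa_smult (inverse (vv - inverse vv)) (fa_diff (Kg k) (Kig k))) [1..<r+1])"
proof -
  have split: "[1..<n+1] = [1..<r+1] @ [r+1..<n+1]"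
    using assms upt_add_eq_append[of 1 "r + 1" "n - r"] by simp
  have low: "map (\<lambda>k. map (one_factor k) [1..<omega r k + 1]) [1..<r+1]
      = map (\<lambda>k. [fa_smult (inverse (vv - inverse vv)) (fa_diff (Kg k) (Kig k))]) [1..<r+1]"
    by (rule map_cong) (auto simp: omega_def one_factor_def fa_smult_def fa_diff_def)
  have high: "concat (map (\<lambda>k. map (one_factor k) [1..<omega r k + 1]) [r+1..<n+1]) = []"
    by (auto simp: omega_def simp del: upt_Suc)
  show ?thesis
    unfolding one_lam_def split map_append concat_append low high concat_map_singleton
    by (simp only: append_Nil2)
qed

definition M_nc :: "nat \<Rightarrow> nat \<Rightarrow> ncpoly" where
  "M_nc n r = (\<Prod>j\<leftarrow>rev [1..<r]. nc_mono [GE j]) * (\<Prod>j\<leftarrow>[r+1..<n+1]. nc_mono [GE j])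
    * (\<Prod>k\<leftarrow>[1..<r+1]. nc_smult (inverse (vv - inverse vv)) (nc_mono [GK k] - nc_mono [GKi k]))"

lemma fa_M_eq_Rep_M_nc:
  "r \<le> n \<Longrightarrow> fa_mult (fa_mult (fa_prod (map Eg (rev [1..<r]))) (fa_prod (map Eg [r+1..<n+1])))
    (one_lam n (omega r)) = Rep_ncpoly (M_nc n r)"
  unfolding M_nc_def one_lam_omega by (simp only: fa_Rep)

lemma tclass_Eword: "tclass n r (\<Prod>j\<leftarrow>ks. nc_mono [GE j]) = tunit n r * Eword n r ks"
  by (simp add: tclass_prod_list Eword_def tE_def)

lemma tclass_tone_omega:
  "tclass n r (\<Prod>k\<leftarrow>[1..<r+1]. nc_smult (inverse (vv - inverse vv)) (nc_mono [GK k] - nc_mono [GKi k]))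
    = tone_omega n r"
  by (simp add: tclass_prod_list tone_omega_def tKbracket_def tclass_smult tclass_diff tK_def tKi_def)

lemma tclass_M_nc:
  "tclass n r (M_nc n r) = Eword n r (rev [1..<r]) * Eword n r [r+1..<n+1] * tone_omega n r"
proof -
  have "tclass n r (M_nc n r) = tunit n r * Eword n r (rev [1..<r])
      * (tunit n r * (Eword n r [r+1..<n+1] * tone_omega n r))"
    by (simp only: M_nc_def tclass_mult tclass_Eword tclass_tone_omega mult.assoc)
  also have "\<dots> = tunit n r * (Eword n r (rev [1..<r] @ [r+1..<n+1]) * tone_omega n r)"
    by (simp only: tunit_mult_Eword_tone_omega Eword_append mult.assoc)
  also have "\<dots> = Eword n r (rev [1..<r]) * Eword n r [r+1..<n+1] * tone_omega n r"
    by (subst tunit_mult_Eword_tone_omega) (simp only: Eword_append)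
  finally show ?thesis .
qed

theorem lemma2p3p6:
  fixes n r i :: nat
  assumes "r \<ge> 3" and "n > r" and "1 < i" and "i < r"
  defines "M \<equiv> fa_mult (fa_mult (fa_prod (map Eg (rev [1..<r]))) (fa_prod (map Eg [r+1..<n+1])))
                      (one_lam n (omega r))"
  shows "T_eq n r
           (fa_mult (fa_diff (fa_smult vv (fa_mult (Fg (i - 1)) (Eg (i - 1)))) (fa_mono [])) M)
           (fa_mult M (fa_diff (fa_smult vv (fa_mult (Fg i) (Eg i))) (fa_mono [])))"
proof -
  define MT where "MT = Eword n r (rev [1..<r]) * Eword n r [r+1..<n+1] * tone_omega n r"
  have "tunit n r * MT = MT" "MT * tunit n r = MT"
    unfolding MT_def using tunit_mult_Eword_tone_omega by (metis mult.assoc tunit_central)+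
  moreover have "tF n r (i - 1) * tE n r (i - 1) * MT = MT * (tF n r i * tE n r i)"
    unfolding MT_def by (rule tF_tE_mult_M[OF assms(3,4,2)])
  ultimately show ?thesis
    unfolding M_def fa_M_eq_Rep_M_nc[OF less_imp_le[OF assms(2)]]
    by (simp only: fa_Rep nc_mono_Nil T_eq_iff_tclass tclass_simps tclass_M_nc MT_def[symmetric])
      (simp add: left_diff_distrib right_diff_distrib tsmult_mult_left tsmult_mult_right)
qed

end
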